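(* Let $A\in\mathbb{R}^{nm\times nm}$ be symmetric with eigenvalues $\lambda_1\le\lambda_2\le\dots\le\lambda_{nm}$, let $x=\operatorname{vec}(X)$ with $\|x\|=1$ and thin SVD $X=USV^\top$ ($U^\top U=I_r$, $V^\top V=I_r$, $S$ diagonal positive), and let $C=A-\mathfrak{R}(x)I_{nm}$ with $\mathfrak{R}(x)=x^\top Ax$. Then for every nonzero $\tau\in\mathbb{R}^{nr+mr+r^2}$ with $B^\top\tau=0$: (i) $z=E\tau$ is nonzero, orthogonal to $x$, satisfies $\|z\|=\|\tau\|$, and $\tau^\top C_{\mathrm{loc}}\tau=z^\top Cz$; consequently \[ \frac{\tau^\top C_{\mathrm{loc}}\tau}{\tau^\top\tau}\in\Big[\min_{z\perp x,\,z\ne0}\frac{z^\top Cz}{z^\top z},\ \max_{z\perp x,\,z\ne0}\frac{z^\top Cz}{z^\top z}\Big]; \] (ii) $\tau^\top C_{\mathrm{loc}}\tau\ge(\lambda_1+\lambda_2-2\mathfrak{R}(x))\,\|\tau\|^2$. In particular, if $\mathfrak{R}(x)<(\lambda_1+\lambda_2)/2$, then $C_{\mathrm{loc}}$ is positive definite on the subspace $\{\tau: B^\top\tau=0\}$, and the condition number of $(I-BB^\top)C_{\mathrm{loc}}(I-BB^\top)$ restricted to this subspace is at most $\dfrac{\max_{z\perp x,z\ne0} z^\top Cz/z^\top z}{\min_{z\perp x,z\ne0} z^\top Cz/z^\top z}$.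
   Context: $\operatorname{vec}$ is columnwise reshaping. Define $E_v=V\otimes I_n$, $E_u=I_m\otimes U$, $E_{vu}=V\otimes U$, the $nm\times(nr+mr+r^2)$ matrix $E=[E_v\ E_u\ E_{vu}]$ (so $E\,(\operatorname{vec}(U_z),\operatorname{vec}(V_z^\top),\operatorname{vec}(S_z))=\operatorname{vec}(U_zV^\top+UV_z^\top+US_zV^\top)$), and for $M\in\mathbb{R}^{nm\times nm}$, $a,b\in\{v,u,vu\}$, $M_{a,b}=E_a^\top ME_b$. The local matrix is $C_{\mathrm{loc}}=E^\top CE=[C_{a,b}]_{a,b\in\{v,u,vu\}}$. Further \[ B=\begin{bmatrix} I_r\otimes U&0&0\\ 0&V\otimes I_r&0\\ 0&0&\operatorname{vec}(S)\end{bmatrix}, \] so that for $\tau=(\operatorname{vec}(U_z),\operatorname{vec}(V_z^\top),\operatorname{vec}(S_z))$ the condition $B^\top\tau=0$ means $U^\top U_z=0$, $V^\top V_z=0$, $\operatorname{vec}(S)^\top\operatorname{vec}(S_z)=0$. *)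

theory Defs
  imports "Jordan_Normal_Form.Char_Poly"
begin

(* Columnwise reshaping: vec X (i + n*j) = X(i,j) for X of size n x m. *)
definition vecm :: "real mat \<Rightarrow> real vec" where
  "vecm X = vec (dim_row X * dim_col X) (\<lambda>k. X $$ (k mod dim_row X, k div dim_row X))"

definition kron :: "real mat \<Rightarrow> real mat \<Rightarrow> real mat" where
  "kron A B = mat (dim_row A * dim_row B) (dim_col A * dim_col B)
     (\<lambda>(p,q). A $$ (p div dim_row B, q div dim_col B) * B $$ (p mod dim_row B, q mod dim_col B))"

definition hcat :: "real mat \<Rightarrow> real mat \<Rightarrow> real mat" where
  "hcat A B = mat (dim_row A) (dim_col A + dim_col B)
     (\<lambda>(i,j). if j < dim_col A then A $$ (i,j) else B $$ (i, j - dim_col A))"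

definition bdiag :: "real mat \<Rightarrow> real mat \<Rightarrow> real mat" where
  "bdiag A B = four_block_mat A (0\<^sub>m (dim_row A) (dim_col B)) (0\<^sub>m (dim_row B) (dim_col A)) B"

definition colmat :: "real vec \<Rightarrow> real mat" where
  "colmat v = mat (dim_vec v) 1 (\<lambda>(i,j). v $ i)"

definition Emat :: "real mat \<Rightarrow> real mat \<Rightarrow> real mat" where
  "Emat U V = hcat (hcat (kron V (1\<^sub>m (dim_row U))) (kron (1\<^sub>m (dim_row V)) U)) (kron V U)"

definition Bmat :: "real mat \<Rightarrow> real mat \<Rightarrow> real mat \<Rightarrow> real mat" where
  "Bmat U S V = bdiag (bdiag (kron (1\<^sub>m (dim_col U)) U) (kron V (1\<^sub>m (dim_col U)))) (colmat (vecm S))"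

definition rayleigh :: "real mat \<Rightarrow> real vec \<Rightarrow> real" where
  "rayleigh A x = x \<bullet> (A *\<^sub>v x)"

definition perp_quotients :: "real mat \<Rightarrow> real vec \<Rightarrow> real set" where
  "perp_quotients C x = {(z \<bullet> (C *\<^sub>v z)) / (z \<bullet> z) | z.
      z \<in> carrier_vec (dim_vec x) \<and> z \<bullet> x = 0 \<and> z \<noteq> 0\<^sub>v (dim_vec x)}"

definition restr_eigs :: "real mat \<Rightarrow> real vec set \<Rightarrow> real set" where
  "restr_eigs M W = {\<mu>. \<exists>w \<in> W. w \<noteq> 0\<^sub>v (dim_col M) \<and> M *\<^sub>v w = \<mu> \<cdot>\<^sub>v w}"

definition restr_cond :: "real mat \<Rightarrow> real vec set \<Rightarrow> real" where
  "restr_cond M W = Max (restr_eigs M W) / Min (restr_eigs M W)"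

end

(*
  E maps the subspace {tau. B^T tau = 0} isometrically into the orthogonal complement of
  x = vec X = (V \<otimes> U) vec S: the blocks V \<otimes> I, I \<otimes> U and V \<otimes> U of E have orthonormal
  columns, and the constraints U^T U_z = 0, V^T V_z = 0 and <vec S, vec S_z> = 0 kill every
  cross term as well as the component along x. Hence tau^T C_loc tau = z^T C z for z = E tau,
  so the local Rayleigh quotients are Rayleigh quotients of C on x^\<bottom>.

  The lower bound is a Ky Fan type inequality. In an orthonormal eigenbasis q_i of A the
  weights c_i = |z|^2 (q_i . x)^2 + (q_i . z)^2 lie in [0, |z|^2] by Bessel's inequality for
  the orthonormal pair x, z/|z|, and they sum to 2 |z|^2; therefore
  z^T A z + R(x) |z|^2 = sum_i lambda_i c_i >= (lambda_1 + lambda_2) |z|^2.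

  Finally I - B B^T is the orthogonal projection onto ker B^T, so an eigenvector of the
  projected local matrix with nonzero eigenvalue lies in ker B^T, and its eigenvalue is one of
  the local Rayleigh quotients; this bounds the restricted condition number.
*)
theory Submission
  imports Defs "Jordan_Normal_Form.Schur_Decomposition"
begin

lemma scalar_prod_self_pos:
  fixes y :: "real vec"
  assumes "y \<in> carrier_vec k" and "y \<noteq> 0\<^sub>v k"
  shows "y \<bullet> y > 0"
  using conjugate_square_greater_0_vec[OF assms(1)] assms(2) by simp

lemma mult_mat_vec_zero:
  fixes A :: "'a::comm_ring mat"
  shows "A \<in> carrier_mat nr nc \<Longrightarrow> A *\<^sub>v 0\<^sub>v nc = 0\<^sub>v nr"
  by (rule eq_vecI) (auto simp: scalar_prod_def)

lemma scalar_prod_mult_mat_vec: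
  fixes M N :: "real mat"
  assumes M: "M \<in> carrier_mat k p" and N: "N \<in> carrier_mat k q"
    and x: "x \<in> carrier_vec p" and y: "y \<in> carrier_vec q"
  shows "(M *\<^sub>v x) \<bullet> (N *\<^sub>v y) = x \<bullet> ((M\<^sup>T * N) *\<^sub>v y)"
proof -
  have "(M\<^sup>T *\<^sub>v (N *\<^sub>v y)) \<bullet> x = (N *\<^sub>v y) \<bullet> (M *\<^sub>v x)"
    by (rule transpose_vec_mult_scalar[OF M x]) (use N y in auto)
  then show ?thesis
    using comm_scalar_prod[of "M *\<^sub>v x" k "N *\<^sub>v y"] comm_scalar_prod[of x p "M\<^sup>T *\<^sub>v (N *\<^sub>v y)"] M N x y
    by (auto simp: assoc_mult_mat_vec[of _ p k _ q])
qed

lemma quadratic_form_congruence: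
  fixes E C :: "real mat"
  assumes E: "E \<in> carrier_mat k p" and C: "C \<in> carrier_mat k k" and t: "t \<in> carrier_vec p"
  shows "t \<bullet> ((E\<^sup>T * C * E) *\<^sub>v t) = (E *\<^sub>v t) \<bullet> (C *\<^sub>v (E *\<^sub>v t))"
  using scalar_prod_mult_mat_vec[OF E mult_carrier_mat[OF C E] t t] E C t
  by (simp add: assoc_mult_mat[of _ p k _ k _ p] assoc_mult_mat_vec[of _ k k _ p])

lemma transpose_congruence_symmetric:
  fixes A W :: "real mat"
  assumes A: "A \<in> carrier_mat n n" and sym: "A\<^sup>T = A" and W: "W \<in> carrier_mat n k"
  shows "(W\<^sup>T * A * W)\<^sup>T = W\<^sup>T * A * W"
proof -
  have "(W\<^sup>T * A * W)\<^sup>T = W\<^sup>T * (W\<^sup>T * A)\<^sup>T"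
    using A W by (subst transpose_mult[of _ k n _ k]) auto
  also have "(W\<^sup>T * A)\<^sup>T = A\<^sup>T * W"
    using A W by (subst transpose_mult[of _ k n _ n]) auto
  finally show ?thesis using A W sym by (simp add: assoc_mult_mat[of _ k n _ n _ k])
qed

lemma smult_one_mult_mat_vec:
  fixes y :: "real vec"
  assumes y: "y \<in> carrier_vec k"
  shows "(c \<cdot>\<^sub>m 1\<^sub>m k) *\<^sub>v y = c \<cdot>\<^sub>v y"
  using y by auto

section \<open>Orthogonal diagonalisation of real symmetric matrices\<close>

lemma normalized_vec_unit:
  fixes v :: "real vec"
  assumes v: "v \<in> carrier_vec n" and v0: "v \<noteq> 0\<^sub>v n"
  shows "((1 / sqrt (v \<bullet> v)) \<cdot>\<^sub>v v) \<bullet> ((1 / sqrt (v \<bullet> v)) \<cdot>\<^sub>v v) = 1"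
  using scalar_prod_self_pos[OF v v0] v
  by (simp add: smult_scalar_prod_distrib[of _ n] scalar_prod_smult_distrib[of _ n] field_simps)

lemma normalized_cols_orthogonal_mat:
  fixes ws :: "real vec list"
  assumes ws: "set ws \<subseteq> carrier_vec n" "corthogonal ws" "length ws = n"
  defines "W \<equiv> mat_of_cols n (map (\<lambda>w. (1 / sqrt (w \<bullet> w)) \<cdot>\<^sub>v w) ws)"
  shows "W \<in> carrier_mat n n" and "W\<^sup>T * W = 1\<^sub>m n"
    and "\<And>i. i < n \<Longrightarrow> col W i = (1 / sqrt (ws!i \<bullet> ws!i)) \<cdot>\<^sub>v ws!i"
proof -
  show W: "W \<in> carrier_mat n n" unfolding W_def using ws(3) by auto
  have wsc: "ws ! i \<in> carrier_vec n" if "i < n" for i using ws that by auto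
  have wsnz: "ws ! i \<noteq> 0\<^sub>v n" if "i < n" for i
    using corthogonalD[OF ws(2)] ws(3) wsc that by fastforce
  show colW: "col W i = (1 / sqrt (ws!i \<bullet> ws!i)) \<cdot>\<^sub>v ws!i" if "i < n" for i
    unfolding W_def using ws wsc that by (simp add: col_mat_of_cols)
  show "W\<^sup>T * W = 1\<^sub>m n"
  proof (rule eq_matI)
    fix i j assume "i < dim_row (1\<^sub>m n)" "j < dim_col (1\<^sub>m n)"
    then have i: "i < n" and j: "j < n" by auto
    show "(W\<^sup>T * W) $$ (i, j) = 1\<^sub>m n $$ (i, j)"
    proof (cases "i = j")
      case True
      then show ?thesis using W i colW normalized_vec_unit[OF wsc wsnz] by simp
    next
      case False
      then have "ws ! i \<bullet> ws ! j = 0" using corthogonalD[OF ws(2)] ws(3) i j by auto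
      then show ?thesis using False W i j colW wsc
        by (simp add: smult_scalar_prod_distrib[of _ n] scalar_prod_smult_distrib[of _ n])
    qed
  qed (use W in auto)
qed

lemma orthogonal_mat_with_first_col:
  fixes v :: "real vec"
  assumes v: "v \<in> carrier_vec n" and v1: "v \<bullet> v = 1"
  shows "\<exists>W \<in> carrier_mat n n. W\<^sup>T * W = 1\<^sub>m n \<and> col W 0 = v"
proof -
  have v0: "v \<noteq> 0\<^sub>v n" using v1 v by auto
  with v have n: "n \<noteq> 0" by (cases n) auto
  interpret cof_vec_space n "TYPE(real)" .
  define b where "b = basis_completion v"
  from basis_completion[OF v v0, folded b_def]
  have dist_b: "distinct b" and indep: "\<not> lin_dep (set b)" and bc: "set b \<subseteq> carrier_vec n"
    and hdb: "hd b = v" and len_b: "length b = n" by auto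
  from hdb len_b n obtain vs where bv: "b = v # vs" by (cases b) auto
  define ws where "ws = gram_schmidt n b"
  from gram_schmidt_result[OF bc dist_b indep refl, folded ws_def]
  have ws: "set ws \<subseteq> carrier_vec n" "corthogonal ws" "length ws = n" by (auto simp: len_b)
  have "ws ! 0 = v"
    using gram_schmidt_hd[OF v, of vs, folded bv ws_def] ws(3) n by (cases ws) auto
  then show ?thesis using normalized_cols_orthogonal_mat[OF ws] n v1 by auto
qed

lemma unit_eigenvector_exists:
  fixes A :: "real mat"
  assumes A: "A \<in> carrier_mat n n" and e: "eigenvalue A e"
  obtains v where "v \<in> carrier_vec n" "v \<bullet> v = 1" "A *\<^sub>v v = e \<cdot>\<^sub>v v"
proof -
  from find_eigenvector[OF A e] A obtain v where v: "v \<in> carrier_vec n" and v0: "v \<noteq> 0\<^sub>v n"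
    and Av: "A *\<^sub>v v = e \<cdot>\<^sub>v v" unfolding eigenvector_def by auto
  show thesis
  proof (rule that)
    show "(1 / sqrt (v \<bullet> v)) \<cdot>\<^sub>v v \<in> carrier_vec n" using v by simp
    show "((1 / sqrt (v \<bullet> v)) \<cdot>\<^sub>v v) \<bullet> ((1 / sqrt (v \<bullet> v)) \<cdot>\<^sub>v v) = 1" by (rule normalized_vec_unit[OF v v0])
    show "A *\<^sub>v ((1 / sqrt (v \<bullet> v)) \<cdot>\<^sub>v v) = e \<cdot>\<^sub>v ((1 / sqrt (v \<bullet> v)) \<cdot>\<^sub>v v)"
      using A v Av by (simp add: mult_mat_vec[of _ n n] smult_smult_assoc mult.commute)
  qed
qed

lemma orthogonal_conj_eigen_first_col:
  fixes A W :: "real mat"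
  assumes A: "A \<in> carrier_mat n n" and W: "W \<in> carrier_mat n n" and WtW: "W\<^sup>T * W = 1\<^sub>m n"
    and n: "0 < n" and eig: "A *\<^sub>v col W 0 = e \<cdot>\<^sub>v col W 0" and i: "i < n"
  shows "(W\<^sup>T * A * W) $$ (i,0) = (if i = 0 then e else 0)"
proof -
  have "(W\<^sup>T * A * W) $$ (i,0) = row W\<^sup>T i \<bullet> col (A * W) 0"
    using W A i n by (simp add: assoc_mult_mat[of _ n n _ n _ n])
  also have "col (A * W) 0 = e \<cdot>\<^sub>v col W 0"
    using col_mult2[of A n n W n 0] W A n eig by simp
  also have "row W\<^sup>T i \<bullet> (e \<cdot>\<^sub>v col W 0) = e * (W\<^sup>T * W) $$ (i,0)"
    using W i n by (simp add: scalar_prod_smult_distrib[of _ n])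
  finally show ?thesis using WtW i n by simp
qed

lemma symmetric_deflation:
  fixes A W :: "real mat"
  assumes A: "A \<in> carrier_mat n n" and sym: "A\<^sup>T = A"
    and W: "W \<in> carrier_mat n n" and WtW: "W\<^sup>T * W = 1\<^sub>m n" and n: "0 < n"
    and eig: "A *\<^sub>v col W 0 = e \<cdot>\<^sub>v col W 0"
  defines "A3 \<equiv> mat (n-1) (n-1) (\<lambda>(i,j). (W\<^sup>T * A * W) $$ (Suc i, Suc j))"
  shows "W\<^sup>T * A * W = four_block_mat (mat 1 1 (\<lambda>_. e)) (0\<^sub>m 1 (n-1)) (0\<^sub>m (n-1) 1) A3"
    and "A3\<^sup>T = A3"
proof -
  let ?A' = "W\<^sup>T * A * W"
  have A': "?A' \<in> carrier_mat n n" using W A by auto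
  have A'sym: "?A'\<^sup>T = ?A'" by (rule transpose_congruence_symmetric[OF A sym W])
  have A'col: "?A' $$ (i,0) = (if i = 0 then e else 0)" if "i < n" for i
    by (rule orthogonal_conj_eigen_first_col[OF A W WtW n eig that])
  have A'row: "?A' $$ (0,j) = (if j = 0 then e else 0)" if j: "j < n" for j
  proof -
    have "?A' $$ (0,j) = ?A'\<^sup>T $$ (0,j)" using A'sym by simp
    also have "\<dots> = ?A' $$ (j,0)" using W j n by simp
    finally show ?thesis using A'col[OF j] by simp
  qed
  show "?A' = four_block_mat (mat 1 1 (\<lambda>_. e)) (0\<^sub>m 1 (n-1)) (0\<^sub>m (n-1) 1) A3"
  proof (rule eq_matI)
    fix i j assume "i < dim_row (four_block_mat (mat 1 1 (\<lambda>_. e)) (0\<^sub>m 1 (n-1)) (0\<^sub>m (n-1) 1) A3)"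
      "j < dim_col (four_block_mat (mat 1 1 (\<lambda>_. e)) (0\<^sub>m 1 (n-1)) (0\<^sub>m (n-1) 1) A3)"
    then have i: "i < n" and j: "j < n" using n by (auto simp: A3_def)
    show "?A' $$ (i,j) = four_block_mat (mat 1 1 (\<lambda>_. e)) (0\<^sub>m 1 (n-1)) (0\<^sub>m (n-1) 1) A3 $$ (i,j)"
    proof (cases "i = 0 \<or> j = 0")
      case True
      then show ?thesis using A'col A'row i j n by (auto simp: A3_def)
    next
      case False
      then obtain i' j' where "i = Suc i'" "j = Suc j'" by (cases i; cases j) auto
      then show ?thesis using i j n by (simp add: A3_def)
    qed
  qed (use A' n in \<open>auto simp: A3_def\<close>)
  show "A3\<^sup>T = A3"
  proof (rule eq_matI)
    fix i j assume "i < dim_row A3" "j < dim_col A3"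
    then have i: "i < n - 1" and j: "j < n - 1" by (auto simp: A3_def)
    have "?A' $$ (Suc j, Suc i) = ?A'\<^sup>T $$ (Suc i, Suc j)" using W i j by simp
    then show "A3\<^sup>T $$ (i,j) = A3 $$ (i,j)" using i j A'sym by (simp add: A3_def)
  qed (auto simp: A3_def)
qed

lemma orthogonal_mat_block_extension:
  fixes Q :: "real mat"
  assumes Q: "Q \<in> carrier_mat k k" and QtQ: "Q\<^sup>T * Q = 1\<^sub>m k" and QQt: "Q * Q\<^sup>T = 1\<^sub>m k"
  defines "Q' \<equiv> four_block_mat (1\<^sub>m 1) (0\<^sub>m 1 k) (0\<^sub>m k 1) Q"
  shows "Q' \<in> carrier_mat (Suc k) (Suc k)" and "Q'\<^sup>T * Q' = 1\<^sub>m (Suc k)" and "Q' * Q'\<^sup>T = 1\<^sub>m (Suc k)"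
proof -
  show "Q' \<in> carrier_mat (Suc k) (Suc k)" unfolding Q'_def using Q by auto
  have Q't: "Q'\<^sup>T = four_block_mat (1\<^sub>m 1) (0\<^sub>m 1 k) (0\<^sub>m k 1) Q\<^sup>T"
    unfolding Q'_def using Q by (subst transpose_four_block_mat[of _ 1 1 _ k _ k]) auto
  show "Q'\<^sup>T * Q' = 1\<^sub>m (Suc k)" "Q' * Q'\<^sup>T = 1\<^sub>m (Suc k)"
    unfolding Q't unfolding Q'_def using Q QtQ QQt
    by (subst mult_four_block_mat[of _ 1 1 _ k _ k _ _ 1 _ k]; auto)+
qed

lemma char_poly_deflation:
  fixes A :: "real mat"
  assumes A: "A \<in> carrier_mat n n" and A3: "A3 \<in> carrier_mat k k"
    and sim: "similar_mat (four_block_mat (mat 1 1 (\<lambda>_. e)) (0\<^sub>m 1 k) (0\<^sub>m k 1) A3) A"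
    and cp: "char_poly A = [:- e, 1:] * p"
  shows "char_poly A3 = p"
proof -
  have "char_poly A = char_poly (four_block_mat (mat 1 1 (\<lambda>_. e)) (0\<^sub>m 1 k) (0\<^sub>m k 1) A3)"
    by (rule char_poly_similar[OF sim, symmetric])
  also have "\<dots> = char_poly (mat 1 1 (\<lambda>_. e)) * char_poly A3"
    by (rule char_poly_four_block_zeros_col) (use A3 in auto)
  also have "char_poly (mat 1 1 (\<lambda>_. e)) = [: -e, 1 :]"
    by (simp add: char_poly_defs det_def sign_def)
  finally show ?thesis using cp by (metis mult_cancel_left pCons_eq_0_iff zero_neq_one)
qed

lemma mat_diag_Cons_block:
  "four_block_mat (mat 1 1 (\<lambda>_. e)) (0\<^sub>m 1 k) (0\<^sub>m k 1) (mat_diag k ((!) es))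
   = mat_diag (Suc k) ((!) (e # es))"
  by (rule eq_matI) (auto simp: mat_diag_def nth_Cons')

lemma orthogonal_deflation_step:
  fixes A W A3 Q3 :: "real mat"
  assumes A: "A \<in> carrier_mat (Suc k) (Suc k)"
    and W: "W \<in> carrier_mat (Suc k) (Suc k)" and WtW: "W\<^sup>T * W = 1\<^sub>m (Suc k)"
    and A3: "A3 \<in> carrier_mat k k"
    and defl: "W\<^sup>T * A * W = four_block_mat (mat 1 1 (\<lambda>_. e)) (0\<^sub>m 1 k) (0\<^sub>m k 1) A3"
    and Q3: "Q3 \<in> carrier_mat k k" "Q3\<^sup>T * Q3 = 1\<^sub>m k" "Q3 * Q3\<^sup>T = 1\<^sub>m k"
    and Q3d: "Q3\<^sup>T * A3 * Q3 = mat_diag k ((!) es)"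
  shows "\<exists>Q \<in> carrier_mat (Suc k) (Suc k). Q\<^sup>T * Q = 1\<^sub>m (Suc k) \<and> Q * Q\<^sup>T = 1\<^sub>m (Suc k)
           \<and> Q\<^sup>T * A * Q = mat_diag (Suc k) ((!) (e # es))"
proof -
  define n where "n = Suc k"
  define Q' where "Q' = four_block_mat (1\<^sub>m 1) (0\<^sub>m 1 k) (0\<^sub>m k 1) Q3"
  note Q' = orthogonal_mat_block_extension[OF Q3, folded Q'_def n_def]
  note A = A[folded n_def] and W = W[folded n_def] and WtW = WtW[folded n_def]
  define Q where "Q = W * Q'"
  have Q: "Q \<in> carrier_mat n n" unfolding Q_def using W Q' by auto
  have Qt: "Q\<^sup>T = Q'\<^sup>T * W\<^sup>T" unfolding Q_def using W Q' by (simp add: transpose_mult[of _ n n])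
  have "Q\<^sup>T * Q = Q'\<^sup>T * (W\<^sup>T * W) * Q'" unfolding Qt unfolding Q_def using W Q'
    by (simp add: assoc_mult_mat[of _ n n _ n _ n])
  then have o1: "Q\<^sup>T * Q = 1\<^sub>m n" using WtW Q' by simp
  have o2: "Q * Q\<^sup>T = 1\<^sub>m n" using mat_mult_left_right_inverse[of "Q\<^sup>T" n Q] Q o1 by auto
  have "Q\<^sup>T * A * Q = Q'\<^sup>T * (W\<^sup>T * A * W) * Q'" unfolding Qt unfolding Q_def using W Q' A
    by (simp add: assoc_mult_mat[of _ n n _ n _ n])
  also have "\<dots> = four_block_mat (mat 1 1 (\<lambda>_. e)) (0\<^sub>m 1 k) (0\<^sub>m k 1) (Q3\<^sup>T * A3 * Q3)"
    unfolding defl Q'_def using Q3 A3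
    by (subst transpose_four_block_mat[of _ 1 1 _ k _ k]; auto;
        (subst mult_four_block_mat[of _ 1 1 _ k _ k _ _ 1 _ k]; auto)+)
  also have "\<dots> = mat_diag n ((!) (e # es))" unfolding Q3d n_def by (rule mat_diag_Cons_block)
  finally show ?thesis using Q o1 o2 unfolding n_def by blast
qed

theorem symmetric_orthogonal_diagonalization:
  fixes A :: "real mat"
  assumes "A \<in> carrier_mat n n" and "A\<^sup>T = A" and "char_poly A = (\<Prod>e \<leftarrow> es. [:- e, 1:])"
  shows "\<exists>Q \<in> carrier_mat n n. Q\<^sup>T * Q = 1\<^sub>m n \<and> Q * Q\<^sup>T = 1\<^sub>m n
           \<and> Q\<^sup>T * A * Q = mat_diag n ((!) es) \<and> length es = n"
  using assms
proof (induction es arbitrary: n A)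
  case Nil
  with degree_monic_char_poly[OF Nil(1)] have "n = 0" by simp
  then show ?case using Nil(1) by (intro bexI[of _ "1\<^sub>m 0"]) (auto intro!: eq_matI simp: mat_diag_def)
next
  case (Cons e es n A)
  note A = Cons(2) and sym = Cons(3)
  have cp: "char_poly A = [: -e, 1 :] * (\<Prod>e \<leftarrow> es. [:- e, 1:])" using Cons(4) by simp
  have "monic (\<Prod>e\<leftarrow> es. [:- e, 1:])" by (rule monic_prod_list) auto
  then have "degree (char_poly A) = Suc (degree (\<Prod>e\<leftarrow> es. [:- e, 1:]))"
    unfolding cp by (subst degree_mult_eq) auto
  with degree_monic_char_poly[OF A] obtain k where nk: "n = Suc k" by (cases n) auto
  have "eigenvalue A e" unfolding eigenvalue_root_char_poly[OF A] cp by simp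
  then obtain v where v: "v \<in> carrier_vec n" "v \<bullet> v = 1" and Av: "A *\<^sub>v v = e \<cdot>\<^sub>v v"
    using unit_eigenvector_exists[OF A] by blast
  from orthogonal_mat_with_first_col[OF v] obtain W where W: "W \<in> carrier_mat n n"
    and WtW: "W\<^sup>T * W = 1\<^sub>m n" and col0: "col W 0 = v" by blast
  have WWt: "W * W\<^sup>T = 1\<^sub>m n" using mat_mult_left_right_inverse[of "W\<^sup>T" n W] W WtW by auto
  define A3 where "A3 = mat k k (\<lambda>(i,j). (W\<^sup>T * A * W) $$ (Suc i, Suc j))"
  have A3: "A3 \<in> carrier_mat k k" unfolding A3_def by simp
  have defl: "W\<^sup>T * A * W = four_block_mat (mat 1 1 (\<lambda>_. e)) (0\<^sub>m 1 k) (0\<^sub>m k 1) A3" "A3\<^sup>T = A3"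
    using symmetric_deflation[OF A sym W WtW _ Av[folded col0]] nk unfolding A3_def by simp_all
  have "similar_mat_wit (W\<^sup>T * A * W) A (W\<^sup>T) W"
    unfolding similar_mat_wit_def Let_def using W A WtW WWt by auto
  then have "similar_mat (four_block_mat (mat 1 1 (\<lambda>_. e)) (0\<^sub>m 1 k) (0\<^sub>m k 1) A3) A"
    unfolding similar_mat_def defl(1)[symmetric] by blast
  from Cons.IH[OF A3 defl(2) char_poly_deflation[OF A A3 this cp]]
  obtain Q3 where "Q3 \<in> carrier_mat k k" "Q3\<^sup>T * Q3 = 1\<^sub>m k" "Q3 * Q3\<^sup>T = 1\<^sub>m k"
    "Q3\<^sup>T * A3 * Q3 = mat_diag k ((!) es)" and "length es = k" by blast
  with orthogonal_deflation_step[OF A[unfolded nk] W[unfolded nk] WtW[unfolded nk] A3 defl(1)[unfolded nk]]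
  show ?case using nk by auto
qed

lemma symmetric_eigenvalue_real:
  fixes A :: "real mat" and w :: "complex vec"
  assumes A: "A \<in> carrier_mat n n" and sym: "A\<^sup>T = A"
    and w: "w \<in> carrier_vec n" "w \<noteq> 0\<^sub>v n"
    and ev: "map_mat complex_of_real A *\<^sub>v w = a \<cdot>\<^sub>v w"
  shows "Im a = 0"
proof -
  have Aij: "A $$ (i,j) = A $$ (j,i)" if "i < n" "j < n" for i j
    using arg_cong[OF sym, of "\<lambda>M. M $$ (j,i)"] A that by simp
  have Mw: "(\<Sum>j<n. complex_of_real (A $$ (i,j)) * w $ j) = a * w $ i" if i: "i < n" for i
    using arg_cong[OF ev, of "\<lambda>v. v $ i"] A w i by (simp add: scalar_prod_def lessThan_atLeast0)
  define s where "s = (\<Sum>i<n. \<Sum>j<n. cnj (w $ i) * complex_of_real (A $$ (i,j)) * w $ j)"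
  define N where "N = (\<Sum>i<n. (cmod (w $ i))^2)"
  have "s = (\<Sum>i<n. cnj (w $ i) * (\<Sum>j<n. complex_of_real (A $$ (i,j)) * w $ j))"
    unfolding s_def by (simp add: sum_distrib_left mult.assoc)
  also have "\<dots> = a * (\<Sum>i<n. cnj (w $ i) * w $ i)"
    using Mw by (simp add: sum_distrib_left ac_simps)
  also have "(\<Sum>i<n. cnj (w $ i) * w $ i) = complex_of_real N"
    unfolding N_def of_real_sum by (intro sum.cong refl) (subst complex_norm_square, simp add: mult.commute)
  finally have s: "s = a * complex_of_real N" .
  \<comment> \<open>the Hermitian form of a symmetric real matrix is real\<close>
  have "cnj s = (\<Sum>i<n. \<Sum>j<n. w $ i * complex_of_real (A $$ (i,j)) * cnj (w $ j))"
    unfolding s_def by (simp add: cnj_sum)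
  also have "\<dots> = (\<Sum>j<n. \<Sum>i<n. w $ i * complex_of_real (A $$ (i,j)) * cnj (w $ j))"
    by (rule sum.swap)
  also have "\<dots> = s" unfolding s_def by (intro sum.cong refl) (simp add: Aij ac_simps)
  finally have "cnj s = s" .
  from arg_cong[OF this, of Im] have "Im s = 0" by simp
  moreover have "N \<noteq> 0"
  proof
    assume "N = 0"
    then have "\<forall>i\<in>{..<n}. (cmod (w $ i))^2 = 0" unfolding N_def
      by (subst (asm) sum_nonneg_eq_0_iff) auto
    then have "w = 0\<^sub>v n" using w by (intro eq_vecI) auto
    then show False using w by blast
  qed
  ultimately show "Im a = 0" unfolding s by simp
qed

lemma symmetric_char_poly_splits:
  fixes A :: "real mat"
  assumes A: "A \<in> carrier_mat n n" and sym: "A\<^sup>T = A"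
  shows "\<exists>es. char_poly A = (\<Prod>e \<leftarrow> es. [:- e, 1:])"
proof -
  let ?Ac = "map_mat complex_of_real A"
  have Ac: "?Ac \<in> carrier_mat n n" using A by simp
  from char_poly_factorized[OF Ac] obtain as where cAc: "char_poly ?Ac = (\<Prod>a\<leftarrow>as. [:- a, 1:])"
    by blast
  have re: "complex_of_real (Re a) = a" if a: "a \<in> set as" for a
  proof -
    have "poly (char_poly ?Ac) a = 0" unfolding cAc using a
      by (simp add: poly_prod_list prod_list_zero_iff)
    then have "eigenvalue ?Ac a" using eigenvalue_root_char_poly[OF Ac] by simp
    from find_eigenvector[OF Ac this, unfolded eigenvector_def] Ac
    obtain w where "w \<in> carrier_vec n" "w \<noteq> 0\<^sub>v n" "?Ac *\<^sub>v w = a \<cdot>\<^sub>v w" by auto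
    from symmetric_eigenvalue_real[OF A sym this] show ?thesis by (simp add: complex_eq_iff)
  qed
  interpret ph: map_poly_inj_idom_hom complex_of_real ..
  have "map_poly complex_of_real (\<Prod>e \<leftarrow> map Re as. [:- e, 1:]) = (\<Prod>a\<leftarrow>as. [:- a, 1:])"
    using re
  proof (induct as)
    case (Cons a as)
    then show ?case by (simp only: list.map prod_list.Cons ph.hom_mult) simp
  qed simp
  also have "\<dots> = map_poly complex_of_real (char_poly A)"
    unfolding cAc[symmetric] using of_real_hom.char_poly_hom[OF A] by simp
  finally show ?thesis by (metis ph.injectivity)
qed

section \<open>Quadratic forms on the orthogonal complement of a unit vector\<close>

lemma orthogonal_mat_parseval:
  fixes Q :: "real mat"
  assumes Q: "Q \<in> carrier_mat n n" and QQt: "Q * Q\<^sup>T = 1\<^sub>m n" and y: "y \<in> carrier_vec n"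
  shows "(\<Sum>i<n. (col Q i \<bullet> y)^2) = y \<bullet> y"
proof -
  have "(\<Sum>i<n. (col Q i \<bullet> y)^2) = (Q\<^sup>T *\<^sub>v y) \<bullet> (Q\<^sup>T *\<^sub>v y)"
    using Q y by (simp add: scalar_prod_def lessThan_atLeast0 power2_eq_square)
  also have "\<dots> = y \<bullet> ((Q * Q\<^sup>T) *\<^sub>v y)"
    using scalar_prod_mult_mat_vec[of "Q\<^sup>T" n n "Q\<^sup>T" n y y] Q y by simp
  finally show ?thesis using QQt y by simp
qed

lemma quadratic_form_eigen_expansion:
  fixes A Q :: "real mat"
  assumes A: "A \<in> carrier_mat n n" and Q: "Q \<in> carrier_mat n n" and QQt: "Q * Q\<^sup>T = 1\<^sub>m n"
    and D: "Q\<^sup>T * A * Q = mat_diag n f" and y: "y \<in> carrier_vec n"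
  shows "y \<bullet> (A *\<^sub>v y) = (\<Sum>i<n. f i * (col Q i \<bullet> y)^2)"
proof -
  have "Q * mat_diag n f * Q\<^sup>T = (Q * Q\<^sup>T) * A * (Q * Q\<^sup>T)" unfolding D[symmetric] using A Q
    by (simp add: assoc_mult_mat[of _ n n _ n _ n])
  then have AD: "A = Q * mat_diag n f * Q\<^sup>T" unfolding QQt using A by simp
  define p where "p = Q\<^sup>T *\<^sub>v y"
  have p: "p \<in> carrier_vec n" unfolding p_def using Q y by simp
  have pi: "p $ i = col Q i \<bullet> y" if "i < n" for i unfolding p_def using Q y that by simp
  have Dp: "mat_diag n f *\<^sub>v p \<in> carrier_vec n" by (rule mult_mat_vec_carrier[OF mat_diag_dim p])
  have "A *\<^sub>v y = Q *\<^sub>v (mat_diag n f *\<^sub>v p)"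
    unfolding AD p_def using Q y by (simp add: assoc_mult_mat_vec[of _ n n _ n])
  then have "y \<bullet> (A *\<^sub>v y) = y \<bullet> (Q *\<^sub>v (mat_diag n f *\<^sub>v p))" by simp
  also have "\<dots> = p \<bullet> (mat_diag n f *\<^sub>v p)"
    using transpose_vec_mult_scalar[OF Q Dp y] unfolding p_def by simp
  also have "\<dots> = (\<Sum>i<n. f i * (col Q i \<bullet> y)^2)"
    using p by (simp add: mat_diag_def scalar_prod_def lessThan_atLeast0 pi power2_eq_square
        if_distrib[of "\<lambda>x. x * _"] ac_simps cong: if_cong)
  finally show ?thesis .
qed

lemma sorted_weighted_sum_ge_two_smallest:
  fixes ls :: "real list" and c :: "nat \<Rightarrow> real"
  assumes srt: "sorted ls" and len: "length ls = n"
    and c0: "\<And>i. i < n \<Longrightarrow> 0 \<le> c i" and cs: "\<And>i. i < n \<Longrightarrow> c i \<le> s"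
    and sum: "(\<Sum>i<n. c i) = 2 * s" and s: "s > 0"
  shows "(\<Sum>i<n. ls ! i * c i) \<ge> (ls ! 0 + ls ! 1) * s"
proof -
  have n2: "n \<ge> 2"
  proof (rule ccontr)
    assume "\<not> n \<ge> 2"
    then have "n = 0 \<or> n = 1" by auto
    then show False using sum s cs[of 0] by auto
  qed
  have l01: "ls ! 0 \<le> ls ! 1" using srt len n2 by (auto simp: sorted_nth_mono)
  \<comment> \<open>after shifting by ls ! 1 only the weight of ls ! 0 can contribute negatively\<close>
  have "(\<Sum>i<n. (ls ! i - ls ! 1) * c i) = (ls ! 0 - ls ! 1) * c 0 + (\<Sum>i\<in>{1..<n}. (ls ! i - ls ! 1) * c i)"
    using sum.atLeast_Suc_lessThan[of 0 n "\<lambda>i. (ls ! i - ls ! 1) * c i"] n2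
    by (simp add: atLeast0LessThan)
  moreover have "(\<Sum>i\<in>{1..<n}. (ls ! i - ls ! 1) * c i) \<ge> 0"
    using srt len c0 by (intro sum_nonneg mult_nonneg_nonneg) (auto simp: sorted_nth_mono)
  moreover have "(\<Sum>i<n. (ls ! i - ls ! 1) * c i) + ls ! 1 * (\<Sum>i<n. c i) = (\<Sum>i<n. ls ! i * c i)"
    unfolding sum_distrib_left sum.distrib[symmetric] by (rule sum.cong) (auto simp: algebra_simps)
  moreover have "(ls ! 1 - ls ! 0) * (s - c 0) \<ge> 0" using l01 cs[of 0] n2 by simp
  ultimately show ?thesis unfolding sum by (simp add: algebra_simps)
qed

lemma bessel_orthogonal_pair:
  fixes q x z :: "real vec"
  assumes q: "q \<in> carrier_vec n" and x: "x \<in> carrier_vec n" and z: "z \<in> carrier_vec n"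
    and qq: "q \<bullet> q = 1" and xx: "x \<bullet> x = 1" and zx: "z \<bullet> x = 0" and s: "z \<bullet> z > 0"
  shows "(z \<bullet> z) * (q \<bullet> x)^2 + (q \<bullet> z)^2 \<le> z \<bullet> z"
proof -
  define s where "s = z \<bullet> z"
  define a where "a = q \<bullet> x"
  define b where "b = q \<bullet> z"
  \<comment> \<open>r is s times the component of q orthogonal to x and z\<close>
  define r where "r = s \<cdot>\<^sub>v q - (s * a) \<cdot>\<^sub>v x - b \<cdot>\<^sub>v z"
  have r: "r \<in> carrier_vec n" unfolding r_def using q x z by auto
  have xq: "x \<bullet> q = a" unfolding a_def using comm_scalar_prod[OF x q] by simp
  have zq: "z \<bullet> q = b" unfolding b_def using comm_scalar_prod[OF z q] by simp
  have xz: "x \<bullet> z = 0" using comm_scalar_prod[OF x z] zx by simp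
  have rq: "r \<bullet> q = s - s * a^2 - b^2" unfolding r_def using q x z qq xq zq
    by (simp add: minus_scalar_prod_distrib[of _ n] smult_scalar_prod_distrib[of _ n] power2_eq_square)
  have rx: "r \<bullet> x = 0" unfolding r_def using q x z xx xq zx
    by (simp add: minus_scalar_prod_distrib[of _ n] smult_scalar_prod_distrib[of _ n] a_def)
  have rz: "r \<bullet> z = 0" unfolding r_def using q x z xz zq
    by (simp add: minus_scalar_prod_distrib[of _ n] smult_scalar_prod_distrib[of _ n] s_def b_def)
  have "r \<bullet> r = s * (r \<bullet> q) - (s * a) * (r \<bullet> x) - b * (r \<bullet> z)"
    using r q x z by (subst (2) r_def) (simp add: scalar_prod_minus_distrib[of _ n] scalar_prod_smult_distrib[of _ n])
  then have "r \<bullet> r = s * (s - s * a^2 - b^2)" using rq rx rz by simp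
  moreover have "r \<bullet> r \<ge> 0" by (simp add: scalar_prod_def sum_nonneg)
  ultimately have "s - s * a^2 - b^2 \<ge> 0" using s unfolding s_def by (simp add: zero_le_mult_iff)
  then show ?thesis unfolding s_def a_def b_def by simp
qed

theorem quadratic_form_perp_ge_two_smallest_eigenvalues:
  fixes A :: "real mat"
  assumes A: "A \<in> carrier_mat n n" and sym: "A\<^sup>T = A"
    and cp: "char_poly A = (\<Prod>l \<leftarrow> ls. [:- l, 1:])" and srt: "sorted ls"
    and x: "x \<in> carrier_vec n" and xx: "x \<bullet> x = 1"
    and z: "z \<in> carrier_vec n" and zx: "z \<bullet> x = 0" and s: "z \<bullet> z > 0"
  shows "z \<bullet> (A *\<^sub>v z) + (x \<bullet> (A *\<^sub>v x)) * (z \<bullet> z) \<ge> (ls ! 0 + ls ! 1) * (z \<bullet> z)"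
proof -
  from symmetric_orthogonal_diagonalization[OF A sym cp] obtain Q where Q: "Q \<in> carrier_mat n n"
    and o1: "Q\<^sup>T * Q = 1\<^sub>m n" and o2: "Q * Q\<^sup>T = 1\<^sub>m n" and D: "Q\<^sup>T * A * Q = mat_diag n ((!) ls)"
    and len: "length ls = n" by blast
  define c where "c i = (z \<bullet> z) * (col Q i \<bullet> x)^2 + (col Q i \<bullet> z)^2" for i
  have qq: "col Q i \<bullet> col Q i = 1" if "i < n" for i
    using arg_cong[OF o1, of "\<lambda>M. M $$ (i,i)"] Q that by simp
  have "(\<Sum>i<n. ls ! i * c i) \<ge> (ls ! 0 + ls ! 1) * (z \<bullet> z)"
  proof (rule sorted_weighted_sum_ge_two_smallest[OF srt len _ _ _ s])
    show "0 \<le> c i" for i unfolding c_def using s by simp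
    show "c i \<le> z \<bullet> z" if "i < n" for i
      unfolding c_def using bessel_orthogonal_pair[OF _ x z qq xx zx s] Q that by simp
    show "(\<Sum>i<n. c i) = 2 * (z \<bullet> z)"
      unfolding c_def using orthogonal_mat_parseval[OF Q o2 x] orthogonal_mat_parseval[OF Q o2 z] xx
      by (simp add: sum.distrib sum_distrib_left[symmetric])
  qed
  moreover have "(\<Sum>i<n. ls ! i * c i) = z \<bullet> (A *\<^sub>v z) + (x \<bullet> (A *\<^sub>v x)) * (z \<bullet> z)"
    unfolding quadratic_form_eigen_expansion[OF A Q o2 D x] quadratic_form_eigen_expansion[OF A Q o2 D z] c_def
    by (simp add: sum.distrib sum_distrib_left sum_distrib_right algebra_simps)
  ultimately show ?thesis by simp
qed

lemma symmetric_quadratic_form_bounded: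
  fixes A :: "real mat"
  assumes A: "A \<in> carrier_mat n n" and sym: "A\<^sup>T = A"
  shows "\<exists>K. \<forall>y \<in> carrier_vec n. y \<bullet> (A *\<^sub>v y) \<le> K * (y \<bullet> y)"
proof -
  obtain ls where cp: "char_poly A = (\<Prod>l \<leftarrow> ls. [:- l, 1:])"
    using symmetric_char_poly_splits[OF A sym] by blast
  from symmetric_orthogonal_diagonalization[OF A sym cp] obtain Q where Q: "Q \<in> carrier_mat n n"
    and o2: "Q * Q\<^sup>T = 1\<^sub>m n" and D: "Q\<^sup>T * A * Q = mat_diag n ((!) ls)" by blast
  define K where "K = (\<Sum>i<n. \<bar>ls ! i\<bar>)"
  have Ki: "ls ! i \<le> K" if "i < n" for i
    using member_le_sum[of i "{..<n}" "\<lambda>i. \<bar>ls ! i\<bar>"] that unfolding K_def by auto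
  have "y \<bullet> (A *\<^sub>v y) \<le> K * (y \<bullet> y)" if y: "y \<in> carrier_vec n" for y
  proof -
    have "(\<Sum>i<n. ls ! i * (col Q i \<bullet> y)^2) \<le> (\<Sum>i<n. K * (col Q i \<bullet> y)^2)"
      by (intro sum_mono mult_right_mono Ki) auto
    then show ?thesis
      unfolding quadratic_form_eigen_expansion[OF A Q o2 D y] sum_distrib_left[symmetric]
        orthogonal_mat_parseval[OF Q o2 y] .
  qed
  then show ?thesis by blast
qed

lemma orthogonal_diagonalization_eigenvector:
  fixes M Q :: "real mat"
  assumes M: "M \<in> carrier_mat n n" and Q: "Q \<in> carrier_mat n n"
    and o1: "Q\<^sup>T * Q = 1\<^sub>m n" and o2: "Q * Q\<^sup>T = 1\<^sub>m n" and D: "Q\<^sup>T * M * Q = mat_diag n f"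
    and i: "i < n"
  shows "M *\<^sub>v col Q i = f i \<cdot>\<^sub>v col Q i"
proof -
  have "Q * mat_diag n f * Q\<^sup>T = (Q * Q\<^sup>T) * M * (Q * Q\<^sup>T)" unfolding D[symmetric] using M Q
    by (simp add: assoc_mult_mat[of _ n n _ n _ n])
  then have MD: "M = Q * mat_diag n f * Q\<^sup>T" using M o2 by simp
  have "M * Q = Q * mat_diag n f * (Q\<^sup>T * Q)" unfolding MD using Q mat_diag_dim[of n f]
    by (simp add: assoc_mult_mat[of _ n n _ n _ n] mult_carrier_mat[of _ n n _ n])
  then have "M * Q = Q * mat_diag n f"
    using o1 right_mult_one_mat[OF mult_carrier_mat[OF Q mat_diag_dim]] by simp
  then have "M *\<^sub>v col Q i = col (Q * mat_diag n f) i"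
    using col_mult2[of M n n Q n i] M Q i by simp
  also have "\<dots> = f i \<cdot>\<^sub>v col Q i"
    using Q i by (auto simp: mat_diag_mult_right[OF Q] intro!: eq_vecI)
  finally show ?thesis .
qed

lemma symmetric_nonzero_form_has_eigenvector:
  fixes M :: "real mat"
  assumes M: "M \<in> carrier_mat n n" and sym: "M\<^sup>T = M"
    and w: "w \<in> carrier_vec n" and nz: "w \<bullet> (M *\<^sub>v w) \<noteq> 0"
  shows "\<exists>v \<mu>. v \<in> carrier_vec n \<and> v \<noteq> 0\<^sub>v n \<and> \<mu> \<noteq> 0 \<and> M *\<^sub>v v = \<mu> \<cdot>\<^sub>v v"
proof -
  from symmetric_char_poly_splits[OF M sym] obtain es where cp: "char_poly M = (\<Prod>e \<leftarrow> es. [:- e, 1:])"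
    by blast
  from symmetric_orthogonal_diagonalization[OF M sym cp] obtain Q where Q: "Q \<in> carrier_mat n n"
    and o1: "Q\<^sup>T * Q = 1\<^sub>m n" and o2: "Q * Q\<^sup>T = 1\<^sub>m n" and D: "Q\<^sup>T * M * Q = mat_diag n ((!) es)"
    by blast
  obtain i where i: "i < n" and "es ! i \<noteq> 0"
  proof (rule ccontr)
    assume "\<not> thesis"
    then have "\<forall>i<n. es ! i = 0" using that by blast
    then show False using nz unfolding quadratic_form_eigen_expansion[OF M Q o2 D w] by simp
  qed
  moreover have "col Q i \<noteq> 0\<^sub>v n"
    using arg_cong[OF o1, of "\<lambda>M. M $$ (i,i)"] Q i by auto
  ultimately show ?thesis using orthogonal_diagonalization_eigenvector[OF M Q o1 o2 D i] Q
    by (intro exI[of _ "col Q i"] exI[of _ "es ! i"]) auto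
qed

lemma restr_eigs_finite:
  fixes M :: "real mat"
  assumes M: "M \<in> carrier_mat n n" and W: "W \<subseteq> carrier_vec n"
  shows "finite (restr_eigs M W)"
proof -
  have "restr_eigs M W \<subseteq> {x. poly (char_poly M) x = 0}"
  proof
    fix \<mu> assume "\<mu> \<in> restr_eigs M W"
    then have "eigenvalue M \<mu>"
      using W M unfolding restr_eigs_def eigenvalue_def eigenvector_def by auto
    then show "\<mu> \<in> {x. poly (char_poly M) x = 0}" using eigenvalue_root_char_poly[OF M] by simp
  qed
  moreover have "char_poly M \<noteq> 0" using degree_monic_char_poly[OF M] by auto
  ultimately show ?thesis using poly_roots_finite finite_subset by blast
qed

section \<open>Kronecker products and block matrices\<close>

lemma sum_lessThan_mult_split:
  fixes f :: "nat \<Rightarrow> 'a::comm_monoid_add"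
  shows "(\<Sum>k<a*b. f k) = (\<Sum>i<a. \<Sum>j<b. f (i*b + j))"
  by (simp add: sum.nat_group[symmetric] sum.atLeastLessThan_shift_0 atLeast0LessThan comp_def)

lemma kron_dims[simp]:
  "dim_row (kron A B) = dim_row A * dim_row B" "dim_col (kron A B) = dim_col A * dim_col B"
  unfolding kron_def by simp_all

lemma kron_carrier:
  "A \<in> carrier_mat ra ca \<Longrightarrow> B \<in> carrier_mat rb cb \<Longrightarrow> kron A B \<in> carrier_mat (ra*rb) (ca*cb)"
  by auto

lemma kron_index:
  "p < dim_row A * dim_row B \<Longrightarrow> q < dim_col A * dim_col B \<Longrightarrow>
   kron A B $$ (p,q) = A $$ (p div dim_row B, q div dim_col B) * B $$ (p mod dim_row B, q mod dim_col B)"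
  unfolding kron_def by simp

lemma div_mod_less_mult:
  fixes p a b :: nat
  assumes "p < a * b"
  shows "p div b < a" and "p mod b < b"
proof -
  show "p div b < a" using assms by (rule less_mult_imp_div_less)
  show "p mod b < b" using assms by (cases "b = 0") auto
qed

lemma index_mult_less:
  fixes i j a b :: nat
  assumes "i < a" and "j < b"
  shows "i * b + j < a * b"
proof -
  have "i * b + j < Suc i * b" using assms(2) by simp
  also have "\<dots> \<le> a * b" using assms(1) by (intro mult_right_mono) auto
  finally show ?thesis .
qed

lemma kron_transpose: "(kron A B)\<^sup>T = kron A\<^sup>T B\<^sup>T"
  by (rule eq_matI) (auto simp: kron_index div_mod_less_mult)

lemma kron_mult:
  assumes "dim_col A = dim_row C" and "dim_col B = dim_row D"
  shows "kron A B * kron C D = kron (A * C) (B * D)"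
proof (rule eq_matI)
  fix p q assume "p < dim_row (kron (A * C) (B * D))" and "q < dim_col (kron (A * C) (B * D))"
  then have p: "p < dim_row A * dim_row B" and q: "q < dim_col C * dim_col D" by auto
  let ?a = "dim_col A" and ?b = "dim_col B"
  have "(kron A B * kron C D) $$ (p,q) = (\<Sum>k<?a * ?b. kron A B $$ (p,k) * kron C D $$ (k,q))"
    using p q assms by (simp add: scalar_prod_def lessThan_atLeast0)
  also have "\<dots> = (\<Sum>i<?a. \<Sum>j<?b. (A $$ (p div dim_row B, i) * C $$ (i, q div dim_col D)) *
                    (B $$ (p mod dim_row B, j) * D $$ (j, q mod dim_col D)))"
    unfolding sum_lessThan_mult_split using p q assms index_mult_less
    by (intro sum.cong refl) (simp add: kron_index)
  also have "\<dots> = kron (A * C) (B * D) $$ (p,q)"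
    using p q assms
    by (simp add: kron_index div_mod_less_mult scalar_prod_def lessThan_atLeast0 sum_product)
  finally show "(kron A B * kron C D) $$ (p,q) = kron (A * C) (B * D) $$ (p,q)" .
qed auto

lemma kron_one: "kron (1\<^sub>m a) (1\<^sub>m b) = 1\<^sub>m (a * b)"
proof (rule eq_matI)
  fix p q assume "p < dim_row (1\<^sub>m (a * b))" "q < dim_col (1\<^sub>m (a * b))"
  then show "kron (1\<^sub>m a) (1\<^sub>m b) $$ (p,q) = 1\<^sub>m (a * b) $$ (p,q)"
    by (simp add: kron_index div_mod_less_mult) (metis div_mult_mod_eq)
qed auto

lemma kron_orthonormal_cols:
  assumes "A\<^sup>T * A = 1\<^sub>m a" and "B\<^sup>T * B = 1\<^sub>m b"
  shows "(kron A B)\<^sup>T * kron A B = 1\<^sub>m (a * b)"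
  using assms by (simp add: kron_transpose kron_mult kron_one)

lemma vecm_dim[simp]: "dim_vec (vecm X) = dim_row X * dim_col X"
  unfolding vecm_def by simp

lemma vecm_carrier: "X \<in> carrier_mat n m \<Longrightarrow> vecm X \<in> carrier_vec (n * m)"
  by (intro carrier_vecI) auto

lemma kron_mult_vecm:
  assumes U: "U \<in> carrier_mat n r" and V: "V \<in> carrier_mat m r" and S: "S \<in> carrier_mat r r"
  shows "kron V U *\<^sub>v vecm S = vecm (U * S * V\<^sup>T)"
proof (rule eq_vecI)
  fix p assume "p < dim_vec (vecm (U * S * V\<^sup>T))"
  then have p: "p < m * n" using U V S by (simp add: vecm_def mult.commute)
  have "(kron V U *\<^sub>v vecm S) $ p = (\<Sum>k<r*r. kron V U $$ (p,k) * vecm S $ k)"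
    using U V S p by (simp add: scalar_prod_def lessThan_atLeast0)
  also have "\<dots> = (\<Sum>a<r. \<Sum>b<r. U $$ (p mod n, b) * S $$ (b, a) * V $$ (p div n, a))"
    unfolding sum_lessThan_mult_split using U V S p index_mult_less[of _ r _ r]
    by (intro sum.cong refl) (simp add: kron_index vecm_def)
  also have "\<dots> = (\<Sum>b<r. U $$ (p mod n, b) * (\<Sum>a<r. S $$ (b, a) * V $$ (p div n, a)))"
    by (subst sum.swap) (simp add: sum_distrib_left mult.assoc)
  also have "\<dots> = vecm (U * S * V\<^sup>T) $ p"
    using U V S p div_mod_less_mult[OF p] by (simp add: vecm_def scalar_prod_def lessThan_atLeast0 mult.commute)
  finally show "(kron V U *\<^sub>v vecm S) $ p = vecm (U * S * V\<^sup>T) $ p" .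
qed (use U V S in \<open>simp add: vecm_def\<close>)

lemma zero_vec_append: "0\<^sub>v (k + l) = 0\<^sub>v k @\<^sub>v 0\<^sub>v l"
  by (rule eq_vecI) auto

lemma hcat_carrier: "A \<in> carrier_mat k a \<Longrightarrow> B \<in> carrier_mat k b \<Longrightarrow> hcat A B \<in> carrier_mat k (a + b)"
  unfolding hcat_def by auto

lemma hcat_mult_vec:
  fixes A B :: "real mat"
  assumes A: "A \<in> carrier_mat k a" and B: "B \<in> carrier_mat k b"
    and x: "x \<in> carrier_vec a" and y: "y \<in> carrier_vec b"
  shows "hcat A B *\<^sub>v (x @\<^sub>v y) = A *\<^sub>v x + B *\<^sub>v y"
proof (rule eq_vecI)
  fix i assume "i < dim_vec (A *\<^sub>v x + B *\<^sub>v y)"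
  then have i: "i < k" using A B by simp
  have "row (hcat A B) i = row A i @\<^sub>v row B i"
    using A B i by (intro eq_vecI) (auto simp: hcat_def)
  moreover have "dim_row (hcat A B) = k" using A by (simp add: hcat_def)
  ultimately show "(hcat A B *\<^sub>v (x @\<^sub>v y)) $ i = (A *\<^sub>v x + B *\<^sub>v y) $ i"
    using A B x y i by (simp add: scalar_prod_append[of _ a _ b])
qed (use A B in \<open>auto simp: hcat_def\<close>)

lemma bdiag_carrier:
  "A \<in> carrier_mat ra ca \<Longrightarrow> B \<in> carrier_mat rb cb \<Longrightarrow> bdiag A B \<in> carrier_mat (ra+rb) (ca+cb)"
  unfolding bdiag_def by auto

lemma bdiag_transpose:
  "A \<in> carrier_mat ra ca \<Longrightarrow> B \<in> carrier_mat rb cb \<Longrightarrow> (bdiag A B)\<^sup>T = bdiag A\<^sup>T B\<^sup>T"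
  unfolding bdiag_def by (subst transpose_four_block_mat[of _ ra ca _ cb _ rb]) auto

lemma bdiag_mult:
  "A \<in> carrier_mat ra k \<Longrightarrow> B \<in> carrier_mat rb l \<Longrightarrow> C \<in> carrier_mat k ca \<Longrightarrow> D \<in> carrier_mat l cb \<Longrightarrow>
   bdiag A B * bdiag C D = bdiag (A * C) (B * D)"
  unfolding bdiag_def by (subst mult_four_block_mat[of _ ra k _ l _ rb _ _ ca _ cb]) auto

lemma bdiag_mult_vec:
  "A \<in> carrier_mat ra ca \<Longrightarrow> B \<in> carrier_mat rb cb \<Longrightarrow> x \<in> carrier_vec ca \<Longrightarrow> y \<in> carrier_vec cb \<Longrightarrow>
   bdiag A B *\<^sub>v (x @\<^sub>v y) = (A *\<^sub>v x) @\<^sub>v (B *\<^sub>v y)"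
  unfolding bdiag_def by (subst four_block_mat_mult_vec[of _ ra ca _ cb _ rb]) auto

lemma bdiag_one: "bdiag (1\<^sub>m a) (1\<^sub>m b) = 1\<^sub>m (a + b)"
  unfolding bdiag_def by simp

lemma colmat_carrier: "v \<in> carrier_vec k \<Longrightarrow> colmat v \<in> carrier_mat k 1"
  unfolding colmat_def by auto

lemma colmat_transpose_mult_vec:
  "v \<in> carrier_vec k \<Longrightarrow> c \<in> carrier_vec k \<Longrightarrow> (colmat v)\<^sup>T *\<^sub>v c = vec 1 (\<lambda>_. v \<bullet> c)"
  unfolding colmat_def by (rule eq_vecI) (auto simp: scalar_prod_def)

lemma colmat_gram: "v \<in> carrier_vec k \<Longrightarrow> (colmat v)\<^sup>T * colmat v = mat 1 1 (\<lambda>_. v \<bullet> v)"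
  unfolding colmat_def by (rule eq_matI) (auto simp: scalar_prod_def)

section \<open>The tangent parametrisation E and the constraint matrix B\<close>

lemma Emat_carrier:
  assumes U: "U \<in> carrier_mat n r" and V: "V \<in> carrier_mat m r"
  shows "Emat U V \<in> carrier_mat (n*m) (n*r + m*r + r*r)"
proof -
  have "Emat U V \<in> carrier_mat (m*n) (r*n + m*r + r*r)"
    unfolding Emat_def using U V by (intro hcat_carrier kron_carrier) auto
  then show ?thesis by (simp add: mult.commute)
qed

lemma Emat_mult_vec_append:
  fixes U V :: "real mat"
  assumes U: "U \<in> carrier_mat n r" and V: "V \<in> carrier_mat m r"
    and a: "a \<in> carrier_vec (r*n)" and b: "b \<in> carrier_vec (m*r)" and c: "c \<in> carrier_vec (r*r)"
  shows "Emat U V *\<^sub>v ((a @\<^sub>v b) @\<^sub>v c) = kron V (1\<^sub>m n) *\<^sub>v a + kron (1\<^sub>m m) U *\<^sub>v b + kron V U *\<^sub>v c"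
  unfolding Emat_def using U V a b c
  by (simp add: hcat_mult_vec[of _ "m*n" "r*n" _ "m*r"] hcat_mult_vec[of _ "m*n" "r*n+m*r" _ "r*r"]
      hcat_carrier kron_carrier)

lemma Bmat_blocks:
  assumes U: "U \<in> carrier_mat n r" and V: "V \<in> carrier_mat m r" and S: "S \<in> carrier_mat r r"
  shows "Bmat U S V = bdiag (bdiag (kron (1\<^sub>m r) U) (kron V (1\<^sub>m r))) (colmat (vecm S))"
    and "Bmat U S V \<in> carrier_mat (r*n + m*r + r*r) (r*r + r*r + 1)"
proof -
  show B: "Bmat U S V = bdiag (bdiag (kron (1\<^sub>m r) U) (kron V (1\<^sub>m r))) (colmat (vecm S))"
    unfolding Bmat_def using U by simp
  show "Bmat U S V \<in> carrier_mat (r*n + m*r + r*r) (r*r + r*r + 1)"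
    unfolding B using U V S by (intro bdiag_carrier kron_carrier colmat_carrier vecm_carrier) auto
qed

lemma Bmat_orthonormal_cols:
  fixes U V S :: "real mat"
  assumes U: "U \<in> carrier_mat n r" and V: "V \<in> carrier_mat m r" and S: "S \<in> carrier_mat r r"
    and UU: "U\<^sup>T * U = 1\<^sub>m r" and VV: "V\<^sup>T * V = 1\<^sub>m r" and ss: "vecm S \<bullet> vecm S = 1"
  shows "(Bmat U S V)\<^sup>T * Bmat U S V = 1\<^sub>m (r*r + r*r + 1)"
proof -
  define Bv where "Bv = kron (1\<^sub>m r) U"
  define Bu where "Bu = kron V (1\<^sub>m r)"
  define cs where "cs = colmat (vecm S)"
  have s: "vecm S \<in> carrier_vec (r*r)" using vecm_carrier[OF S] .
  have Bv: "Bv \<in> carrier_mat (r*n) (r*r)" and Bu: "Bu \<in> carrier_mat (m*r) (r*r)"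
    and cs: "cs \<in> carrier_mat (r*r) 1"
    unfolding Bv_def Bu_def cs_def using U V colmat_carrier[OF s] by (auto intro: kron_carrier)
  have "Bv\<^sup>T * Bv = 1\<^sub>m (r*r)" "Bu\<^sup>T * Bu = 1\<^sub>m (r*r)"
    unfolding Bv_def Bu_def using UU VV by (simp_all add: kron_orthonormal_cols)
  moreover have "cs\<^sup>T * cs = 1\<^sub>m 1"
    unfolding cs_def colmat_gram[OF s] ss by (rule eq_matI) auto
  moreover have "(Bmat U S V)\<^sup>T * Bmat U S V = bdiag (bdiag (Bv\<^sup>T * Bv) (Bu\<^sup>T * Bu)) (cs\<^sup>T * cs)"
    unfolding Bmat_blocks(1)[OF U V S] Bv_def[symmetric] Bu_def[symmetric] cs_def[symmetric]
    using Bv Bu cs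
    by (simp add: bdiag_transpose[of _ "r*n+m*r" "r*r+r*r" _ "r*r" 1] bdiag_transpose[of _ "r*n" "r*r" _ "m*r" "r*r"]
        bdiag_carrier bdiag_mult[of _ "r*r+r*r" "r*n+m*r" _ "1" "r*r" _ "r*r+r*r" _ 1]
        bdiag_mult[of _ "r*r" "r*n" _ "r*r" "m*r" _ "r*r" _ "r*r"])
  ultimately show ?thesis by (simp add: bdiag_one)
qed

lemma Bmat_kernel_decomp:
  fixes U V S :: "real mat" and \<tau> :: "real vec"
  assumes U: "U \<in> carrier_mat n r" and V: "V \<in> carrier_mat m r" and S: "S \<in> carrier_mat r r"
    and t: "\<tau> \<in> carrier_vec (r*n + m*r + r*r)"
    and ker: "(Bmat U S V)\<^sup>T *\<^sub>v \<tau> = 0\<^sub>v (dim_col (Bmat U S V))"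
  obtains a b c where "a \<in> carrier_vec (r*n)" "b \<in> carrier_vec (m*r)" "c \<in> carrier_vec (r*r)"
    "\<tau> = (a @\<^sub>v b) @\<^sub>v c" "(kron (1\<^sub>m r) U)\<^sup>T *\<^sub>v a = 0\<^sub>v (r*r)"
    "(kron V (1\<^sub>m r))\<^sup>T *\<^sub>v b = 0\<^sub>v (r*r)" "vecm S \<bullet> c = 0"
proof -
  define Bv where "Bv = kron (1\<^sub>m r) U"
  define Bu where "Bu = kron V (1\<^sub>m r)"
  define cs where "cs = colmat (vecm S)"
  have s: "vecm S \<in> carrier_vec (r*r)" using vecm_carrier[OF S] .
  have Bv: "Bv \<in> carrier_mat (r*n) (r*r)" and Bu: "Bu \<in> carrier_mat (m*r) (r*r)"
    and cs: "cs \<in> carrier_mat (r*r) 1"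
    unfolding Bv_def Bu_def cs_def using U V colmat_carrier[OF s] by (auto intro: kron_carrier)
  define a where "a = vec_first (vec_first \<tau> (r*n + m*r)) (r*n)"
  define b where "b = vec_last (vec_first \<tau> (r*n + m*r)) (m*r)"
  define c where "c = vec_last \<tau> (r*r)"
  have a: "a \<in> carrier_vec (r*n)" and b: "b \<in> carrier_vec (m*r)" and c: "c \<in> carrier_vec (r*r)"
    unfolding a_def b_def c_def by auto
  have \<tau>: "\<tau> = (a @\<^sub>v b) @\<^sub>v c" unfolding a_def b_def c_def using t
    by (metis vec_first_last_append carrier_vec_dim_vec vec_first_carrier)
  have z: "((Bv\<^sup>T *\<^sub>v a) @\<^sub>v (Bu\<^sup>T *\<^sub>v b)) @\<^sub>v (cs\<^sup>T *\<^sub>v c) = (0\<^sub>v (r*r) @\<^sub>v 0\<^sub>v (r*r)) @\<^sub>v 0\<^sub>v 1"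
    using ker Bmat_blocks[OF U V S] Bv Bu cs a b c
    unfolding \<tau> Bv_def[symmetric] Bu_def[symmetric] cs_def[symmetric] zero_vec_append[symmetric]
    by (simp add: bdiag_transpose[of _ "r*n+m*r" "r*r+r*r" _ "r*r" 1] bdiag_transpose[of _ "r*n" "r*r" _ "m*r" "r*r"]
        bdiag_carrier bdiag_mult_vec[of _ "r*r+r*r" "r*n+m*r" _ 1 "r*r"] bdiag_mult_vec[of _ "r*r" "r*n" _ "r*r" "m*r"])
  have c1: "(Bv\<^sup>T *\<^sub>v a) @\<^sub>v (Bu\<^sup>T *\<^sub>v b) \<in> carrier_vec (r*r + r*r)"
    and c2: "Bv\<^sup>T *\<^sub>v a \<in> carrier_vec (r*r)"
    and c3: "0\<^sub>v (r*r) @\<^sub>v 0\<^sub>v (r*r) \<in> carrier_vec (r*r + r*r)"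
    using Bv Bu a b by auto
  from z have "((Bv\<^sup>T *\<^sub>v a = 0\<^sub>v (r*r) \<and> Bu\<^sup>T *\<^sub>v b = 0\<^sub>v (r*r))) \<and> cs\<^sup>T *\<^sub>v c = 0\<^sub>v 1"
    by (simp only: append_vec_eq[OF c1 c3] append_vec_eq[OF c2 zero_carrier_vec])
  then have "Bv\<^sup>T *\<^sub>v a = 0\<^sub>v (r*r)" "Bu\<^sup>T *\<^sub>v b = 0\<^sub>v (r*r)" and cs0: "cs\<^sup>T *\<^sub>v c = 0\<^sub>v 1"
    by blast+
  moreover have "vecm S \<bullet> c = 0"
    using arg_cong[OF cs0, of "\<lambda>v. v $ 0"] unfolding cs_def colmat_transpose_mult_vec[OF s c] by simp
  ultimately show thesis using that a b c \<tau> unfolding Bv_def Bu_def by blast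
qed

lemma scalar_prod_orthogonal_sum3:
  fixes p q s :: "real vec"
  assumes p: "p \<in> carrier_vec k" and q: "q \<in> carrier_vec k" and s: "s \<in> carrier_vec k"
    and "p \<bullet> q = 0" and "p \<bullet> s = 0" and "q \<bullet> s = 0"
  shows "(p + q + s) \<bullet> (p + q + s) = p \<bullet> p + q \<bullet> q + s \<bullet> s"
  using assms comm_scalar_prod[OF p q] comm_scalar_prod[OF p s] comm_scalar_prod[OF q s]
  by (simp add: add_scalar_prod_distrib[of _ k] scalar_prod_add_distrib[of _ k])

lemma Emat_blocks_inner_products:
  fixes U V :: "real mat" and a b :: "real vec"
  assumes U: "U \<in> carrier_mat n r" and V: "V \<in> carrier_mat m r"
    and UU: "U\<^sup>T * U = 1\<^sub>m r" and VV: "V\<^sup>T * V = 1\<^sub>m r"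
    and a: "a \<in> carrier_vec (r*n)" and b: "b \<in> carrier_vec (m*r)"
    and ha: "(kron (1\<^sub>m r) U)\<^sup>T *\<^sub>v a = 0\<^sub>v (r*r)" and hb: "(kron V (1\<^sub>m r))\<^sup>T *\<^sub>v b = 0\<^sub>v (r*r)"
  defines "Ev \<equiv> kron V (1\<^sub>m n)" and "Eu \<equiv> kron (1\<^sub>m m) U" and "Evu \<equiv> kron V U"
  shows "(Ev *\<^sub>v a) \<bullet> (Ev *\<^sub>v a) = a \<bullet> a" and "(Eu *\<^sub>v b) \<bullet> (Eu *\<^sub>v b) = b \<bullet> b"
    and "\<And>c d. c \<in> carrier_vec (r*r) \<Longrightarrow> d \<in> carrier_vec (r*r) \<Longrightarrow> (Evu *\<^sub>v c) \<bullet> (Evu *\<^sub>v d) = c \<bullet> d"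
    and "(Ev *\<^sub>v a) \<bullet> (Eu *\<^sub>v b) = 0"
    and "\<And>d. d \<in> carrier_vec (r*r) \<Longrightarrow> (Ev *\<^sub>v a) \<bullet> (Evu *\<^sub>v d) = 0"
    and "\<And>d. d \<in> carrier_vec (r*r) \<Longrightarrow> (Eu *\<^sub>v b) \<bullet> (Evu *\<^sub>v d) = 0"
proof -
  define Bv where "Bv = kron (1\<^sub>m r) U"
  define Bu where "Bu = kron V (1\<^sub>m r)"
  have Ev: "Ev \<in> carrier_mat (m*n) (r*n)" and Eu: "Eu \<in> carrier_mat (m*n) (m*r)"
    and Evu: "Evu \<in> carrier_mat (m*n) (r*r)" and Bv: "Bv \<in> carrier_mat (r*n) (r*r)"
    and Bu: "Bu \<in> carrier_mat (m*r) (r*r)"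
    unfolding Ev_def Eu_def Evu_def Bv_def Bu_def using U V by (auto intro: kron_carrier)
  have hv: "Bv\<^sup>T *\<^sub>v a = 0\<^sub>v (r*r)" and hu: "Bu\<^sup>T *\<^sub>v b = 0\<^sub>v (r*r)"
    using ha hb unfolding Bv_def Bu_def .
  have "Ev\<^sup>T * Eu = Bv * Bu\<^sup>T" "Ev\<^sup>T * Evu = Bv" "Eu\<^sup>T * Evu = Bu"
    unfolding Ev_def Eu_def Evu_def Bv_def Bu_def using U V UU VV by (simp_all add: kron_transpose kron_mult)
  moreover have "Ev\<^sup>T * Ev = 1\<^sub>m (r*n)" "Eu\<^sup>T * Eu = 1\<^sub>m (m*r)" "Evu\<^sup>T * Evu = 1\<^sub>m (r*r)"
    unfolding Ev_def Eu_def Evu_def using UU VV by (simp_all add: kron_orthonormal_cols)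
  ultimately show "(Ev *\<^sub>v a) \<bullet> (Ev *\<^sub>v a) = a \<bullet> a" "(Eu *\<^sub>v b) \<bullet> (Eu *\<^sub>v b) = b \<bullet> b"
    and "\<And>c d. c \<in> carrier_vec (r*r) \<Longrightarrow> d \<in> carrier_vec (r*r) \<Longrightarrow> (Evu *\<^sub>v c) \<bullet> (Evu *\<^sub>v d) = c \<bullet> d"
    and "(Ev *\<^sub>v a) \<bullet> (Eu *\<^sub>v b) = 0"
    and "\<And>d. d \<in> carrier_vec (r*r) \<Longrightarrow> (Ev *\<^sub>v a) \<bullet> (Evu *\<^sub>v d) = 0"
    and "\<And>d. d \<in> carrier_vec (r*r) \<Longrightarrow> (Eu *\<^sub>v b) \<bullet> (Evu *\<^sub>v d) = 0"
    using scalar_prod_mult_mat_vec[OF Ev Ev a a] scalar_prod_mult_mat_vec[OF Eu Eu b b]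
      scalar_prod_mult_mat_vec[OF Evu Evu] scalar_prod_mult_mat_vec[OF Ev Eu a b]
      scalar_prod_mult_mat_vec[OF Ev Evu a] scalar_prod_mult_mat_vec[OF Eu Evu b]
      transpose_vec_mult_scalar[OF Bv _ a] transpose_vec_mult_scalar[OF Bu _ b] a b Bv Bu hv hu
      mult_mat_vec_zero[OF Bv]
    by (simp_all add: assoc_mult_mat_vec[of _ "r*n" "r*r" _ "m*r"])
qed

lemma Emat_kernel_isometry:
  fixes U V S :: "real mat" and a b c :: "real vec"
  assumes U: "U \<in> carrier_mat n r" and V: "V \<in> carrier_mat m r" and S: "S \<in> carrier_mat r r"
    and UU: "U\<^sup>T * U = 1\<^sub>m r" and VV: "V\<^sup>T * V = 1\<^sub>m r"
    and a: "a \<in> carrier_vec (r*n)" and b: "b \<in> carrier_vec (m*r)" and c: "c \<in> carrier_vec (r*r)"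
    and ha: "(kron (1\<^sub>m r) U)\<^sup>T *\<^sub>v a = 0\<^sub>v (r*r)"
    and hb: "(kron V (1\<^sub>m r))\<^sup>T *\<^sub>v b = 0\<^sub>v (r*r)"
    and hc: "vecm S \<bullet> c = 0"
  defines "z \<equiv> Emat U V *\<^sub>v ((a @\<^sub>v b) @\<^sub>v c)"
  shows "z \<bullet> z = a \<bullet> a + b \<bullet> b + c \<bullet> c" and "z \<bullet> (kron V U *\<^sub>v vecm S) = 0"
proof -
  note ip = Emat_blocks_inner_products[OF U V UU VV a b ha hb]
  have s: "vecm S \<in> carrier_vec (r*r)" using vecm_carrier[OF S] .
  have cv: "kron V (1\<^sub>m n) *\<^sub>v a \<in> carrier_vec (m*n)" "kron (1\<^sub>m m) U *\<^sub>v b \<in> carrier_vec (m*n)"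
    "\<And>d. d \<in> carrier_vec (r*r) \<Longrightarrow> kron V U *\<^sub>v d \<in> carrier_vec (m*n)"
    using U V a b by (auto intro!: mult_mat_vec_carrier kron_carrier)
  have z: "z = kron V (1\<^sub>m n) *\<^sub>v a + kron (1\<^sub>m m) U *\<^sub>v b + kron V U *\<^sub>v c"
    unfolding z_def by (rule Emat_mult_vec_append[OF U V a b c])
  show "z \<bullet> z = a \<bullet> a + b \<bullet> b + c \<bullet> c"
    unfolding z scalar_prod_orthogonal_sum3[OF cv(1,2) cv(3)[OF c] ip(4) ip(5)[OF c] ip(6)[OF c]]
    using ip(1,2) ip(3)[OF c c] by simp
  show "z \<bullet> (kron V U *\<^sub>v vecm S) = 0"
    unfolding z using cv(1,2) cv(3)[OF c] cv(3)[OF s] ip(5,6)[OF s] ip(3)[OF c s] hc comm_scalar_prod[OF s c]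
    by (simp add: add_scalar_prod_distrib[of _ "m*n"])
qed

lemma Emat_tangent_vector:
  fixes U V S :: "real mat" and \<tau> :: "real vec"
  assumes U: "U \<in> carrier_mat n r" and V: "V \<in> carrier_mat m r" and S: "S \<in> carrier_mat r r"
    and UU: "U\<^sup>T * U = 1\<^sub>m r" and VV: "V\<^sup>T * V = 1\<^sub>m r"
    and t: "\<tau> \<in> carrier_vec (n*r + m*r + r*r)"
    and ker: "(Bmat U S V)\<^sup>T *\<^sub>v \<tau> = 0\<^sub>v (dim_col (Bmat U S V))"
  shows "(Emat U V *\<^sub>v \<tau>) \<bullet> (Emat U V *\<^sub>v \<tau>) = \<tau> \<bullet> \<tau>"
    and "(Emat U V *\<^sub>v \<tau>) \<bullet> vecm (U * S * V\<^sup>T) = 0"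
proof -
  have t': "\<tau> \<in> carrier_vec (r*n + m*r + r*r)" using t by (simp add: mult.commute)
  obtain a b c where a: "a \<in> carrier_vec (r*n)" and b: "b \<in> carrier_vec (m*r)"
    and c: "c \<in> carrier_vec (r*r)" and \<tau>: "\<tau> = (a @\<^sub>v b) @\<^sub>v c"
    and ha: "(kron (1\<^sub>m r) U)\<^sup>T *\<^sub>v a = 0\<^sub>v (r*r)" and hb: "(kron V (1\<^sub>m r))\<^sup>T *\<^sub>v b = 0\<^sub>v (r*r)"
    and hc: "vecm S \<bullet> c = 0"
    by (rule Bmat_kernel_decomp[OF U V S t' ker])
  note iso = Emat_kernel_isometry[OF U V S UU VV a b c ha hb hc]
  have "\<tau> \<bullet> \<tau> = a \<bullet> a + b \<bullet> b + c \<bullet> c" unfolding \<tau> using a b c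
    by (simp add: scalar_prod_append[of _ "r*n+m*r" _ "r*r"] scalar_prod_append[of _ "r*n" _ "m*r"])
  then show "(Emat U V *\<^sub>v \<tau>) \<bullet> (Emat U V *\<^sub>v \<tau>) = \<tau> \<bullet> \<tau>" using iso(1) \<tau> by simp
  show "(Emat U V *\<^sub>v \<tau>) \<bullet> vecm (U * S * V\<^sup>T) = 0"
    using iso(2) kron_mult_vecm[OF U V S] \<tau> by simp
qed

section \<open>Eigenvalues of the projected local matrix\<close>

lemma projection_complement_fixes_kernel:
  fixes B :: "real mat"
  assumes B: "B \<in> carrier_mat N K" and w: "w \<in> carrier_vec N" and bw: "B\<^sup>T *\<^sub>v w = 0\<^sub>v K"
  shows "(1\<^sub>m N - B * B\<^sup>T) *\<^sub>v w = w"
proof -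
  have "(1\<^sub>m N - B * B\<^sup>T) *\<^sub>v w = w - B *\<^sub>v (B\<^sup>T *\<^sub>v w)"
    using B w by (simp add: minus_mult_distrib_mat_vec[of _ N N] assoc_mult_mat_vec[of _ N K _ N])
  then show ?thesis using B w unfolding bw mult_mat_vec_zero[OF B] by simp
qed

lemma projection_complement_carrier:
  "B \<in> carrier_mat N K \<Longrightarrow> 1\<^sub>m N - B * B\<^sup>T \<in> carrier_mat N N"
  by (intro minus_carrier_mat) auto

lemma projection_complement_symmetric:
  fixes B :: "real mat"
  assumes B: "B \<in> carrier_mat N K"
  shows "(1\<^sub>m N - B * B\<^sup>T)\<^sup>T = 1\<^sub>m N - B * B\<^sup>T"
  using B by (simp add: transpose_minus[of _ N N] transpose_mult[of _ N K])

lemma projected_form_on_kernel: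
  fixes B Cl :: "real mat"
  assumes B: "B \<in> carrier_mat N K" and Cl: "Cl \<in> carrier_mat N N"
    and w: "w \<in> carrier_vec N" and bw: "B\<^sup>T *\<^sub>v w = 0\<^sub>v K"
  shows "w \<bullet> (((1\<^sub>m N - B * B\<^sup>T) * Cl * (1\<^sub>m N - B * B\<^sup>T)) *\<^sub>v w) = w \<bullet> (Cl *\<^sub>v w)"
proof -
  let ?P = "1\<^sub>m N - B * B\<^sup>T"
  have P: "?P \<in> carrier_mat N N" using projection_complement_carrier[OF B] .
  have Pw: "?P *\<^sub>v w = w" by (rule projection_complement_fixes_kernel[OF B w bw])
  have "w \<bullet> ((?P * Cl * ?P) *\<^sub>v w) = w \<bullet> (?P *\<^sub>v (Cl *\<^sub>v w))"
    using P Cl w Pw by (simp add: assoc_mult_mat_vec[of _ N N _ N])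
  also have "\<dots> = (?P\<^sup>T *\<^sub>v w) \<bullet> (Cl *\<^sub>v w)"
    by (rule transpose_vec_mult_scalar[symmetric]) (use P Cl w in auto)
  finally show ?thesis unfolding projection_complement_symmetric[OF B] Pw .
qed

lemma projected_eigenvector_in_kernel:
  fixes B Cl :: "real mat"
  assumes B: "B \<in> carrier_mat N K" and BtB: "B\<^sup>T * B = 1\<^sub>m K" and Cl: "Cl \<in> carrier_mat N N"
    and v: "v \<in> carrier_vec N" and \<mu>: "\<mu> \<noteq> 0"
    and ev: "((1\<^sub>m N - B * B\<^sup>T) * Cl * (1\<^sub>m N - B * B\<^sup>T)) *\<^sub>v v = \<mu> \<cdot>\<^sub>v v"
  shows "B\<^sup>T *\<^sub>v v = 0\<^sub>v K"
proof -
  let ?P = "1\<^sub>m N - B * B\<^sup>T"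
  have "B\<^sup>T * ?P = B\<^sup>T * 1\<^sub>m N - B\<^sup>T * (B * B\<^sup>T)"
    by (rule mult_minus_distrib_mat[of _ K N]) (use B in auto)
  also have "B\<^sup>T * (B * B\<^sup>T) = (B\<^sup>T * B) * B\<^sup>T" using B by (simp add: assoc_mult_mat[of _ K N _ K _ N])
  finally have BtP: "B\<^sup>T * ?P = 0\<^sub>m K N" unfolding BtB using B by simp
  have P: "?P \<in> carrier_mat N N" using projection_complement_carrier[OF B] .
  have y: "Cl *\<^sub>v (?P *\<^sub>v v) \<in> carrier_vec N" using P Cl v by simp
  have "\<mu> \<cdot>\<^sub>v (B\<^sup>T *\<^sub>v v) = B\<^sup>T *\<^sub>v (\<mu> \<cdot>\<^sub>v v)" using B v by (simp add: mult_mat_vec[of _ K N])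
  also have "\<dots> = B\<^sup>T *\<^sub>v (?P *\<^sub>v (Cl *\<^sub>v (?P *\<^sub>v v)))"
    unfolding ev[symmetric] using P Cl v by (simp add: assoc_mult_mat_vec[of _ N N _ N])
  also have "\<dots> = (B\<^sup>T * ?P) *\<^sub>v (Cl *\<^sub>v (?P *\<^sub>v v))"
    using assoc_mult_mat_vec[of "B\<^sup>T" K N ?P N, OF _ P y] B by simp
  also have "\<dots> = 0\<^sub>v K" unfolding BtP using y Cl by (intro eq_vecI) (auto simp: scalar_prod_def)
  finally have "(1 / \<mu>) \<cdot>\<^sub>v (\<mu> \<cdot>\<^sub>v (B\<^sup>T *\<^sub>v v)) = 0\<^sub>v K" by (auto intro: eq_vecI)
  then show ?thesis using \<mu> by (simp add: smult_smult_assoc)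
qed

lemma projected_restr_eigs_nonempty:
  fixes B Cl :: "real mat"
  assumes B: "B \<in> carrier_mat N K" and BtB: "B\<^sup>T * B = 1\<^sub>m K"
    and Cl: "Cl \<in> carrier_mat N N" and sym: "Cl\<^sup>T = Cl"
    and W: "W = {w \<in> carrier_vec N. B\<^sup>T *\<^sub>v w = 0\<^sub>v K}"
    and w0: "w0 \<in> W" and form: "w0 \<bullet> (Cl *\<^sub>v w0) \<noteq> 0"
  shows "restr_eigs ((1\<^sub>m N - B * B\<^sup>T) * Cl * (1\<^sub>m N - B * B\<^sup>T)) W \<noteq> {}"
proof -
  define M where "M = (1\<^sub>m N - B * B\<^sup>T) * Cl * (1\<^sub>m N - B * B\<^sup>T)"
  have M: "M \<in> carrier_mat N N" unfolding M_def using projection_complement_carrier[OF B] Cl by simp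
  have Msym: "M\<^sup>T = M" unfolding M_def
    using transpose_congruence_symmetric[OF Cl sym projection_complement_carrier[OF B]]
    by (simp add: projection_complement_symmetric[OF B])
  have w0c: "w0 \<in> carrier_vec N" and bw0: "B\<^sup>T *\<^sub>v w0 = 0\<^sub>v K" using w0 W by auto
  have "w0 \<bullet> (M *\<^sub>v w0) \<noteq> 0"
    unfolding M_def projected_form_on_kernel[OF B Cl w0c bw0] by (rule form)
  from symmetric_nonzero_form_has_eigenvector[OF M Msym w0c this]
  obtain v \<mu> where v: "v \<in> carrier_vec N" "v \<noteq> 0\<^sub>v N" and \<mu>: "\<mu> \<noteq> 0" and ev: "M *\<^sub>v v = \<mu> \<cdot>\<^sub>v v"
    by blast
  have "v \<in> W" using projected_eigenvector_in_kernel[OF B BtB Cl v(1) \<mu> ev[unfolded M_def]] v W by simp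
  then show ?thesis using v ev M unfolding M_def[symmetric] restr_eigs_def by auto
qed

theorem restr_cond_projection_le:
  fixes B Cl :: "real mat" and Q :: "real set"
  assumes B: "B \<in> carrier_mat N K" and BtB: "B\<^sup>T * B = 1\<^sub>m K"
    and Cl: "Cl \<in> carrier_mat N N" and sym: "Cl\<^sup>T = Cl"
    and W: "W = {w \<in> carrier_vec N. B\<^sup>T *\<^sub>v w = 0\<^sub>v K}" and ne: "W \<noteq> {0\<^sub>v N}"
    and quot: "\<And>w. w \<in> W \<Longrightarrow> w \<noteq> 0\<^sub>v N \<Longrightarrow> (w \<bullet> (Cl *\<^sub>v w)) / (w \<bullet> w) \<in> Q"
    and above: "bdd_above Q" and lower: "\<And>q. q \<in> Q \<Longrightarrow> c \<le> q" and pos: "c > 0"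
  shows "restr_cond ((1\<^sub>m N - B * B\<^sup>T) * Cl * (1\<^sub>m N - B * B\<^sup>T)) W \<le> Sup Q / Inf Q"
proof -
  define M where "M = (1\<^sub>m N - B * B\<^sup>T) * Cl * (1\<^sub>m N - B * B\<^sup>T)"
  have M: "M \<in> carrier_mat N N" unfolding M_def using projection_complement_carrier[OF B] Cl by simp
  have below: "bdd_below Q" using lower by (rule bdd_belowI)
  define Eg where "Eg = restr_eigs M W"
  have range: "Inf Q \<le> \<mu> \<and> \<mu> \<le> Sup Q" if \<mu>: "\<mu> \<in> Eg" for \<mu>
  proof -
    obtain w where w: "w \<in> W" "w \<noteq> 0\<^sub>v N" and ev: "M *\<^sub>v w = \<mu> \<cdot>\<^sub>v w"
      using \<mu> M unfolding Eg_def restr_eigs_def by auto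
    have wc: "w \<in> carrier_vec N" and bw: "B\<^sup>T *\<^sub>v w = 0\<^sub>v K" using w W by auto
    have "w \<bullet> (Cl *\<^sub>v w) = \<mu> * (w \<bullet> w)"
      using projected_form_on_kernel[OF B Cl wc bw] wc unfolding M_def[symmetric] ev by simp
    then have "\<mu> \<in> Q" using quot[OF w] scalar_prod_self_pos[OF wc w(2)] by simp
    then show ?thesis using cInf_lower[OF _ below] cSup_upper[OF _ above] by blast
  qed
  obtain w0 where w0: "w0 \<in> W" "w0 \<noteq> 0\<^sub>v N"
    using ne W mult_mat_vec_zero[of "B\<^sup>T" K N] B by auto
  have "c \<le> Inf Q" using quot[OF w0] lower by (intro cInf_greatest) auto
  with pos have Inf_pos: "Inf Q > 0" by linarith
  have "0 < (w0 \<bullet> (Cl *\<^sub>v w0)) / (w0 \<bullet> w0)" using quot[OF w0] lower pos by force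
  then have "Eg \<noteq> {}" unfolding Eg_def M_def
    using projected_restr_eigs_nonempty[OF B BtB Cl sym W w0(1)] by force
  moreover have "finite Eg" unfolding Eg_def by (rule restr_eigs_finite[OF M]) (use W in auto)
  ultimately have MaxE: "Max Eg \<in> Eg" and MinE: "Min Eg \<in> Eg" by (auto intro: Max_in Min_in)
  have "Max Eg / Min Eg \<le> Sup Q / Min Eg"
    using range[OF MaxE] range[OF MinE] Inf_pos by (intro divide_right_mono) auto
  also have "\<dots> \<le> Sup Q / Inf Q"
    using range[OF MaxE] range[OF MinE] Inf_pos by (intro divide_left_mono) auto
  finally show ?thesis unfolding restr_cond_def M_def[symmetric] Eg_def[symmetric] .
qed

section \<open>The local matrix\<close>

lemma shifted_quadratic_form:
  fixes A :: "real mat"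
  assumes A: "A \<in> carrier_mat k k" and y: "y \<in> carrier_vec k"
  shows "y \<bullet> ((A - c \<cdot>\<^sub>m 1\<^sub>m k) *\<^sub>v y) = y \<bullet> (A *\<^sub>v y) - c * (y \<bullet> y)"
  using A y by (simp add: minus_mult_distrib_mat_vec[of _ k k] smult_one_mult_mat_vec
      scalar_prod_minus_distrib[of _ k] scalar_prod_smult_distrib[of _ k])

lemma shifted_form_perp_ge:
  fixes A :: "real mat"
  assumes A: "A \<in> carrier_mat k k" and sym: "A\<^sup>T = A"
    and cp: "char_poly A = (\<Prod>l \<leftarrow> ls. [:- l, 1:])" and srt: "sorted ls"
    and x: "x \<in> carrier_vec k" and xx: "x \<bullet> x = 1"
    and z: "z \<in> carrier_vec k" and zx: "z \<bullet> x = 0" and z0: "z \<noteq> 0\<^sub>v k"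
  shows "z \<bullet> ((A - rayleigh A x \<cdot>\<^sub>m 1\<^sub>m k) *\<^sub>v z) \<ge> (ls ! 0 + ls ! 1 - 2 * rayleigh A x) * (z \<bullet> z)"
  using quadratic_form_perp_ge_two_smallest_eigenvalues[OF A sym cp srt x xx z zx scalar_prod_self_pos[OF z z0]]
  unfolding shifted_quadratic_form[OF A z] rayleigh_def by (simp add: algebra_simps)

lemma perp_quotients_bounds:
  fixes A :: "real mat"
  assumes A: "A \<in> carrier_mat k k" and sym: "A\<^sup>T = A"
    and cp: "char_poly A = (\<Prod>l \<leftarrow> ls. [:- l, 1:])" and srt: "sorted ls"
    and x: "x \<in> carrier_vec k" and xx: "x \<bullet> x = 1"
  defines "C \<equiv> A - rayleigh A x \<cdot>\<^sub>m 1\<^sub>m k"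
  shows "\<And>q. q \<in> perp_quotients C x \<Longrightarrow> ls ! 0 + ls ! 1 - 2 * rayleigh A x \<le> q"
    and "bdd_above (perp_quotients C x)"
proof -
  obtain K where K: "\<And>y. y \<in> carrier_vec k \<Longrightarrow> y \<bullet> (A *\<^sub>v y) \<le> K * (y \<bullet> y)"
    using symmetric_quadratic_form_bounded[OF A sym] by blast
  have "ls ! 0 + ls ! 1 - 2 * rayleigh A x \<le> q \<and> q \<le> K - rayleigh A x"
    if q: "q \<in> perp_quotients C x" for q
  proof -
    obtain z where z: "z \<in> carrier_vec k" "z \<bullet> x = 0" "z \<noteq> 0\<^sub>v k"
      and q_eq: "q = (z \<bullet> (C *\<^sub>v z)) / (z \<bullet> z)"
      using q x unfolding perp_quotients_def by auto
    have pos: "z \<bullet> z > 0" using scalar_prod_self_pos[OF z(1,3)] .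
    have "z \<bullet> (C *\<^sub>v z) \<le> (K - rayleigh A x) * (z \<bullet> z)"
      using K[OF z(1)] unfolding C_def shifted_quadratic_form[OF A z(1)] by (simp add: algebra_simps)
    then show ?thesis
      using shifted_form_perp_ge[OF A sym cp srt x xx z] pos unfolding q_eq C_def
      by (simp add: pos_le_divide_eq pos_divide_le_eq)
  qed
  then show "\<And>q. q \<in> perp_quotients C x \<Longrightarrow> ls ! 0 + ls ! 1 - 2 * rayleigh A x \<le> q"
    and "bdd_above (perp_quotients C x)" by (auto intro!: bdd_aboveI[of _ "K - rayleigh A x"])
qed

lemma local_form_on_tangent_space:
  fixes U V S C :: "real mat" and \<tau> :: "real vec"
  assumes U: "U \<in> carrier_mat n r" and V: "V \<in> carrier_mat m r" and S: "S \<in> carrier_mat r r"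
    and UU: "U\<^sup>T * U = 1\<^sub>m r" and VV: "V\<^sup>T * V = 1\<^sub>m r"
    and C: "C \<in> carrier_mat (n*m) (n*m)"
    and t: "\<tau> \<in> carrier_vec (n*r + m*r + r*r)" and t0: "\<tau> \<noteq> 0\<^sub>v (n*r + m*r + r*r)"
    and ker: "(Bmat U S V)\<^sup>T *\<^sub>v \<tau> = 0\<^sub>v (dim_col (Bmat U S V))"
  defines "z \<equiv> Emat U V *\<^sub>v \<tau>" and "x \<equiv> vecm (U * S * V\<^sup>T)"
  shows "z \<in> carrier_vec (n*m)" and "z \<noteq> 0\<^sub>v (n*m)" and "z \<bullet> x = 0" and "z \<bullet> z = \<tau> \<bullet> \<tau>"
    and "\<tau> \<bullet> (((Emat U V)\<^sup>T * C * Emat U V) *\<^sub>v \<tau>) = z \<bullet> (C *\<^sub>v z)"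
    and "(\<tau> \<bullet> (((Emat U V)\<^sup>T * C * Emat U V) *\<^sub>v \<tau>)) / (\<tau> \<bullet> \<tau>) \<in> perp_quotients C x"
proof -
  note E = Emat_carrier[OF U V]
  show zc: "z \<in> carrier_vec (n*m)" unfolding z_def using E t by simp
  show zx: "z \<bullet> x = 0" and zz: "z \<bullet> z = \<tau> \<bullet> \<tau>"
    unfolding z_def x_def using Emat_tangent_vector[OF U V S UU VV t ker] by simp_all
  show z0: "z \<noteq> 0\<^sub>v (n*m)" using zz scalar_prod_self_pos[OF t t0] by auto
  show form: "\<tau> \<bullet> (((Emat U V)\<^sup>T * C * Emat U V) *\<^sub>v \<tau>) = z \<bullet> (C *\<^sub>v z)"
    unfolding z_def by (rule quadratic_form_congruence[OF E C t])
  have "dim_vec x = n * m" unfolding x_def using U V by simp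
  then show "(\<tau> \<bullet> (((Emat U V)\<^sup>T * C * Emat U V) *\<^sub>v \<tau>)) / (\<tau> \<bullet> \<tau>) \<in> perp_quotients C x"
    unfolding perp_quotients_def form zz[symmetric] using zc zx z0 by auto
qed

lemma shifted_symmetric:
  fixes A :: "real mat"
  assumes A: "A \<in> carrier_mat k k" and sym: "A\<^sup>T = A"
  shows "(A - c \<cdot>\<^sub>m 1\<^sub>m k)\<^sup>T = A - c \<cdot>\<^sub>m 1\<^sub>m k"
proof -
  have "(c \<cdot>\<^sub>m 1\<^sub>m k)\<^sup>T = c \<cdot>\<^sub>m 1\<^sub>m k" by (rule eq_matI) auto
  then show ?thesis using A sym by (simp add: transpose_minus[of _ k k])
qed

lemma vecm_svd_norm:
  fixes U V S :: "real mat"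
  assumes U: "U \<in> carrier_mat n r" and V: "V \<in> carrier_mat m r" and S: "S \<in> carrier_mat r r"
    and UU: "U\<^sup>T * U = 1\<^sub>m r" and VV: "V\<^sup>T * V = 1\<^sub>m r"
  shows "vecm (U * S * V\<^sup>T) \<bullet> vecm (U * S * V\<^sup>T) = vecm S \<bullet> vecm S"
proof -
  have K: "kron V U \<in> carrier_mat (m*n) (r*r)" by (rule kron_carrier[OF V U])
  show ?thesis
    unfolding kron_mult_vecm[OF U V S, symmetric]
    using scalar_prod_mult_mat_vec[OF K K vecm_carrier[OF S] vecm_carrier[OF S]]
      kron_orthonormal_cols[OF VV UU] vecm_carrier[OF S] by simp
qed

lemma tangent_local_form:
  fixes A U S V :: "real mat" and ls :: "real list" and \<tau> :: "real vec"
  assumes A: "A \<in> carrier_mat (n*m) (n*m)" and sym: "A\<^sup>T = A"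
    and cp: "char_poly A = (\<Prod>l \<leftarrow> ls. [:- l, 1:])" and srt: "sorted ls"
    and U: "U \<in> carrier_mat n r" and V: "V \<in> carrier_mat m r" and S: "S \<in> carrier_mat r r"
    and UU: "U\<^sup>T * U = 1\<^sub>m r" and VV: "V\<^sup>T * V = 1\<^sub>m r"
    and x_def: "x = vecm (U * S * V\<^sup>T)" and xx: "x \<bullet> x = 1"
    and C_def: "C = A - rayleigh A x \<cdot>\<^sub>m 1\<^sub>m (n*m)" and Cl_def: "Cl = (Emat U V)\<^sup>T * C * Emat U V"
    and t: "\<tau> \<in> carrier_vec (n*r + m*r + r*r)" and t0: "\<tau> \<noteq> 0\<^sub>v (n*r + m*r + r*r)"
    and ker: "(Bmat U S V)\<^sup>T *\<^sub>v \<tau> = 0\<^sub>v (dim_col (Bmat U S V))"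
  defines "z \<equiv> Emat U V *\<^sub>v \<tau>"
  shows "z \<noteq> 0\<^sub>v (n*m) \<and> z \<bullet> x = 0 \<and> z \<bullet> z = \<tau> \<bullet> \<tau> \<and> \<tau> \<bullet> (Cl *\<^sub>v \<tau>) = z \<bullet> (C *\<^sub>v z)"
    and "(\<tau> \<bullet> (Cl *\<^sub>v \<tau>)) / (\<tau> \<bullet> \<tau>) \<in> perp_quotients C x"
    and "(\<tau> \<bullet> (Cl *\<^sub>v \<tau>)) / (\<tau> \<bullet> \<tau>) \<in> {Inf (perp_quotients C x) .. Sup (perp_quotients C x)}"
    and "(ls ! 0 + ls ! 1 - 2 * rayleigh A x) * (\<tau> \<bullet> \<tau>) \<le> \<tau> \<bullet> (Cl *\<^sub>v \<tau>)"
proof -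
  have x: "x \<in> carrier_vec (n*m)" "x \<bullet> x = 1"
    unfolding x_def using xx[unfolded x_def] vecm_carrier[of "U * S * V\<^sup>T" n m] U V S by auto
  have "C \<in> carrier_mat (n*m) (n*m)" unfolding C_def by (intro minus_carrier_mat smult_carrier_mat one_carrier_mat)
  note local = local_form_on_tangent_space[OF U V S UU VV this t t0 ker, folded x_def z_def Cl_def]
  show "z \<noteq> 0\<^sub>v (n*m) \<and> z \<bullet> x = 0 \<and> z \<bullet> z = \<tau> \<bullet> \<tau> \<and> \<tau> \<bullet> (Cl *\<^sub>v \<tau>) = z \<bullet> (C *\<^sub>v z)"
    and quot: "(\<tau> \<bullet> (Cl *\<^sub>v \<tau>)) / (\<tau> \<bullet> \<tau>) \<in> perp_quotients C x"
    using local by simp_all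
  note bounds = perp_quotients_bounds[OF A sym cp srt x, folded C_def]
  have "bdd_below (perp_quotients C x)"
    using bounds(1) by (rule bdd_belowI)
  then show "(\<tau> \<bullet> (Cl *\<^sub>v \<tau>)) / (\<tau> \<bullet> \<tau>) \<in> {Inf (perp_quotients C x) .. Sup (perp_quotients C x)}"
    using cInf_lower[OF quot] cSup_upper[OF quot bounds(2)] by simp
  show "(ls ! 0 + ls ! 1 - 2 * rayleigh A x) * (\<tau> \<bullet> \<tau>) \<le> \<tau> \<bullet> (Cl *\<^sub>v \<tau>)"
    using shifted_form_perp_ge[OF A sym cp srt x local(1,3,2), folded C_def] local(4,5) by simp
qed

lemma tangent_restr_cond_le:
  fixes A U S V :: "real mat" and ls :: "real list"
  assumes A: "A \<in> carrier_mat (n*m) (n*m)" and sym: "A\<^sup>T = A"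
    and cp: "char_poly A = (\<Prod>l \<leftarrow> ls. [:- l, 1:])" and srt: "sorted ls"
    and U: "U \<in> carrier_mat n r" and V: "V \<in> carrier_mat m r" and S: "S \<in> carrier_mat r r"
    and UU: "U\<^sup>T * U = 1\<^sub>m r" and VV: "V\<^sup>T * V = 1\<^sub>m r"
    and x_def: "x = vecm (U * S * V\<^sup>T)" and xx: "x \<bullet> x = 1"
    and C_def: "C = A - rayleigh A x \<cdot>\<^sub>m 1\<^sub>m (n*m)" and Cl_def: "Cl = (Emat U V)\<^sup>T * C * Emat U V"
    and B_def: "B = Bmat U S V" and N_def: "N = n*r + m*r + r*r"
    and W_def: "W = {\<tau> \<in> carrier_vec N. B\<^sup>T *\<^sub>v \<tau> = 0\<^sub>v (dim_col B)}"
    and ne: "W \<noteq> {0\<^sub>v N}" and R: "rayleigh A x < (ls ! 0 + ls ! 1) / 2"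
  shows "restr_cond ((1\<^sub>m N - B * B\<^sup>T) * Cl * (1\<^sub>m N - B * B\<^sup>T)) W
           \<le> Sup (perp_quotients C x) / Inf (perp_quotients C x)"
proof -
  have x: "x \<in> carrier_vec (n*m)" "x \<bullet> x = 1"
    unfolding x_def using xx[unfolded x_def] vecm_carrier[of "U * S * V\<^sup>T" n m] U V S by auto
  have B: "B \<in> carrier_mat N (r*r + r*r + 1)"
    using Bmat_blocks(2)[OF U V S] unfolding B_def N_def by (simp add: mult.commute)
  have BtB: "B\<^sup>T * B = 1\<^sub>m (r*r + r*r + 1)"
    using Bmat_orthonormal_cols[OF U V S UU VV] vecm_svd_norm[OF U V S UU VV] xx unfolding B_def x_def by simp
  have C: "C \<in> carrier_mat (n*m) (n*m)" "C\<^sup>T = C"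
    unfolding C_def using shifted_symmetric[OF A sym] by (auto intro!: minus_carrier_mat)
  have Cl: "Cl \<in> carrier_mat N N" "Cl\<^sup>T = Cl"
    using Emat_carrier[OF U V] C transpose_congruence_symmetric[OF C] unfolding Cl_def N_def by auto
  have W: "W = {w \<in> carrier_vec N. B\<^sup>T *\<^sub>v w = 0\<^sub>v (r*r + r*r + 1)}" using B unfolding W_def by auto
  have quot: "(\<tau> \<bullet> (Cl *\<^sub>v \<tau>)) / (\<tau> \<bullet> \<tau>) \<in> perp_quotients C x" if "\<tau> \<in> W" "\<tau> \<noteq> 0\<^sub>v N" for \<tau>
    using tangent_local_form(2)[OF A sym cp srt U V S UU VV x_def xx C_def Cl_def, of \<tau>] that
    unfolding W_def B_def N_def by auto
  note bounds = perp_quotients_bounds[OF A sym cp srt x, folded C_def]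
  show ?thesis using R by (intro restr_cond_projection_le[OF B BtB Cl W ne quot bounds(2) bounds(1)]) auto
qed

theorem mainTheorem4:
  fixes n m r :: nat and A X U S V :: "real mat" and ls :: "real list"
  assumes A_carr: "A \<in> carrier_mat (n*m) (n*m)"
    and A_sym: "A\<^sup>T = A"
    and eig: "length ls = n*m" "sorted ls"
      "char_poly A = (\<Prod>l \<leftarrow> ls. [:- l, 1:])"
    and X_carr: "X \<in> carrier_mat n m"
    and x_norm: "vecm X \<bullet> vecm X = 1"
    and U_carr: "U \<in> carrier_mat n r" and V_carr: "V \<in> carrier_mat m r"
    and S_carr: "S \<in> carrier_mat r r"
    and U_orth: "U\<^sup>T * U = 1\<^sub>m r" and V_orth: "V\<^sup>T * V = 1\<^sub>m r"
    and S_diag: "\<forall>i<r. \<forall>j<r. i \<noteq> j \<longrightarrow> S $$ (i,j) = 0"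
    and S_pos: "\<forall>i<r. S $$ (i,i) > 0"
    and svd: "X = U * S * V\<^sup>T"
  defines "x \<equiv> vecm X"
    and "C \<equiv> A - rayleigh A (vecm X) \<cdot>\<^sub>m 1\<^sub>m (n*m)"
    and "E \<equiv> Emat U V"
    and "B \<equiv> Bmat U S V"
    and "N \<equiv> n*r + m*r + r*r"
    and "Cloc \<equiv> (Emat U V)\<^sup>T * (A - rayleigh A (vecm X) \<cdot>\<^sub>m 1\<^sub>m (n*m)) * Emat U V"
    and "W \<equiv> {\<tau> \<in> carrier_vec (n*r + m*r + r*r). (Bmat U S V)\<^sup>T *\<^sub>v \<tau> = 0\<^sub>v (dim_col (Bmat U S V))}"
    and "lam1 \<equiv> ls ! 0" and "lam2 \<equiv> ls ! 1"
  shows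
    "(\<forall>\<tau> \<in> W. \<tau> \<noteq> 0\<^sub>v N \<longrightarrow>
        (let z = E *\<^sub>v \<tau> in
           z \<noteq> 0\<^sub>v (n*m) \<and> z \<bullet> x = 0 \<and> sqrt (z \<bullet> z) = sqrt (\<tau> \<bullet> \<tau>)
           \<and> \<tau> \<bullet> (Cloc *\<^sub>v \<tau>) = z \<bullet> (C *\<^sub>v z)
           \<and> (\<tau> \<bullet> (Cloc *\<^sub>v \<tau>)) / (\<tau> \<bullet> \<tau>) \<in>
               {Inf (perp_quotients C x) .. Sup (perp_quotients C x)})
        \<and> \<tau> \<bullet> (Cloc *\<^sub>v \<tau>) \<ge> (lam1 + lam2 - 2 * rayleigh A x) * (\<tau> \<bullet> \<tau>))
     \<and> (rayleigh A x < (lam1 + lam2) / 2 \<longrightarrow>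
        (\<forall>\<tau> \<in> W. \<tau> \<noteq> 0\<^sub>v N \<longrightarrow> \<tau> \<bullet> (Cloc *\<^sub>v \<tau>) > 0)
        \<and> (W \<noteq> {0\<^sub>v N} \<longrightarrow>
            restr_cond ((1\<^sub>m N - B * B\<^sup>T) * Cloc * (1\<^sub>m N - B * B\<^sup>T)) W
              \<le> Sup (perp_quotients C x) / Inf (perp_quotients C x)))"
proof -
  have x_eq: "x = vecm (U * S * V\<^sup>T)" unfolding x_def svd ..
  have C_eq: "C = A - rayleigh A x \<cdot>\<^sub>m 1\<^sub>m (n*m)" unfolding C_def x_def ..
  have Cloc_eq: "Cloc = (Emat U V)\<^sup>T * C * Emat U V" unfolding Cloc_def C_def ..
  note hyps = A_carr A_sym eig(3) eig(2) U_carr V_carr S_carr U_orth V_orth x_eq x_norm[folded x_def] C_eq Cloc_eq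
  note local = tangent_local_form[OF hyps, folded E_def N_def]
  note cond = tangent_restr_cond_le[OF hyps B_def[THEN meta_eq_to_obj_eq] N_def[THEN meta_eq_to_obj_eq]]
  have part_i: "(let z = E *\<^sub>v \<tau> in
           z \<noteq> 0\<^sub>v (n*m) \<and> z \<bullet> x = 0 \<and> sqrt (z \<bullet> z) = sqrt (\<tau> \<bullet> \<tau>)
           \<and> \<tau> \<bullet> (Cloc *\<^sub>v \<tau>) = z \<bullet> (C *\<^sub>v z)
           \<and> (\<tau> \<bullet> (Cloc *\<^sub>v \<tau>)) / (\<tau> \<bullet> \<tau>) \<in> {Inf (perp_quotients C x) .. Sup (perp_quotients C x)})
        \<and> \<tau> \<bullet> (Cloc *\<^sub>v \<tau>) \<ge> (lam1 + lam2 - 2 * rayleigh A x) * (\<tau> \<bullet> \<tau>)"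
    if "\<tau> \<in> W" "\<tau> \<noteq> 0\<^sub>v N" for \<tau>
    using local(1,3,4)[of \<tau>] that unfolding W_def N_def lam1_def lam2_def Let_def by auto
  have "\<tau> \<bullet> (Cloc *\<^sub>v \<tau>) > 0"
    if "rayleigh A x < (lam1 + lam2) / 2" "\<tau> \<in> W" "\<tau> \<noteq> 0\<^sub>v N" for \<tau>
  proof -
    have "\<tau> \<in> carrier_vec N" using that(2) unfolding W_def N_def by simp
    then have "\<tau> \<bullet> \<tau> > 0" using scalar_prod_self_pos that(3) by blast
    with that(1) have "(lam1 + lam2 - 2 * rayleigh A x) * (\<tau> \<bullet> \<tau>) > 0" by simp
    with conjunct2[OF part_i[OF that(2,3)]] show ?thesis by linarith
  qed
  with part_i show ?thesis using cond unfolding W_def N_def B_def lam1_def lam2_def by blast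
qed

end
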